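(* Let $S\subset\hat{\mathcal G}^\ast_-:=\phi^{-1}\mathcal G_+^\perp\oplus\{1\}\subset\hat{\mathcal G}^\ast_1$ be the set of elements $(\mathfrak L,1)$ with \[ \mathfrak{L} = \phi(z)^{-1} \sum_{k=1}^{\infty} z^k \big(k\, A^{(k)} + B^{(k)}\big) \] for some $A,B\in C^\infty(S^1,\mathfrak g)$. Then $S$ is stable under the coadjoint action of $\mathcal G_R$ (i.e. $S$ is a coadjoint orbit-type subset of $\mathcal G_R$ in $\hat{\mathcal G}^\ast_-$): for every $\mathfrak X\in\mathcal G$ and every $(\mathfrak L,1)\in S$, one has $ad_R^\ast\mathfrak X\cdot(\mathfrak L,1)=(\mathfrak L',0)$ with $\mathfrak L'=\phi(z)^{-1}\sum_{k=1}^\infty z^k(k\,A'^{(k)}+B'^{(k)})$ for some $A',B'\in C^\infty(S^1,\mathfrak g)$. In particular, the Lax matrix $\hat{\mathfrak L}=(\mathfrak L,1)$ of the supercoset $\sigma$-model, $\mathfrak L=4\phi(z)^{-1}\sum_{k\ge1}z^k(kA_1^{(k)}+2(\nabla_1\Pi_1)^{(k)})$, belongs to $S$.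
   Context: Setting: $\mathring{\mathfrak g}$ is a Lie superalgebra with automorphism $\Omega$, $\Omega^4=1$, eigenspaces $\mathring{\mathfrak g}_n$, and a non-degenerate invariant graded-symmetric form with $\langle \mathring{\mathfrak g}_n,\mathring{\mathfrak g}_m\rangle=0$ unless $n+m\equiv0\pmod4$; $\mathfrak g=(\Gamma\otimes\mathring{\mathfrak g})_{\bar0}$ its Grassmann envelope, graded $\mathfrak g=\oplus_{n=0}^3\mathfrak g_n$; for $b\in\mathfrak g$ (or a $\mathfrak g$-valued function), $b^{(k)}$ is its component in $\mathfrak g_{(k)}$, $(k)=k\bmod4$. $\mathcal L\mathfrak g^\Omega=\bigoplus_{n\in\mathbb Z}\mathfrak g_{(n)}z^n$ (formal Laurent series, finitely many negative powers), $\mathcal L\mathfrak g^\Omega_+=\bigoplus_{n\ge0}\mathfrak g_{(n)}z^n$, $\mathcal L\mathfrak g^\Omega_-=\bigoplus_{n<0}\mathfrak g_{(n)}z^n$, projections $\pi_\pm$, $R=\pi_+-\pi_-$, and $(\mathcal L\mathfrak g^\Omega_+)^\perp=\bigoplus_{n>0}\mathfrak g_{(n)}z^n$. $\phi(z)=\frac{16z^4}{(1-z^4)^2}$, $(X,Y)_\phi=\oint\frac{dz}{2\pi iz}\phi\langle X,Y\rangle$. $\mathcal G=C^\infty(S^1,\mathcal L\mathfrak g^\Omega)$, $\mathcal G_+^\perp=C^\infty(S^1,(\mathcal L\mathfrak g^\Omega_+)^\perp)$, with $(\!(\mathfrak X,\mathfrak Y)\!)_\phi=\int_{S^1}d\sigma(\mathfrak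 X,\mathfrak Y)_\phi$ and cocycle $\omega(\mathfrak X,\mathfrak Y)=\int d\sigma(\mathfrak X,\partial_\sigma\mathfrak Y)_\phi$. $\hat{\mathcal G}=\mathcal G\oplus\mathbb C$ with bracket $[(\mathfrak X,a),(\mathfrak Y,b)]=([\mathfrak X,\mathfrak Y],\omega(\mathfrak X,\mathfrak Y))$ and pairing $(\!((\mathfrak X,a),(\mathfrak Y,b))\!)_\phi=(\!(\mathfrak X,\mathfrak Y)\!)_\phi+ab$; smooth dual $\hat{\mathcal G}^\ast\simeq\phi^{-1}\mathcal G\oplus\mathbb C$, $\hat{\mathcal G}^\ast_1=\phi^{-1}\mathcal G\oplus\{1\}$. $R(\mathfrak X,c)=(R\mathfrak X,c)$ ($R$ pointwise in $\sigma$); $R$-bracket $[\hat{\mathfrak X},\hat{\mathfrak Y}]_R=\frac12([R\hat{\mathfrak X},\hat{\mathfrak Y}]+[\hat{\mathfrak X},R\hat{\mathfrak Y}])$; $\mathcal G_R$ denotes $\mathcal G$ with this bracket. The coadjoint $R$-action is $(\!(ad_R^\ast(\mathfrak M,c)\cdot(\mathfrak X,a),(\mathfrak Y,b))\!)_\phi=-(\!((\mathfrak X,a),[(\mathfrak M,c),(\mathfrak Y,b)]_R)\!)_\phi$ (independent of $c$). In the Lax matrix, $A_1,\Pi_1\in C^\infty(S^1,\mathfrak g)$ are arbitrary and $\nabla_1=\partial_\sigma-[A_1,\cdot\,]$. *)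

theory Defs
  imports "HOL-Analysis.Analysis" "HOL-Library.Groups_Big_Fun"
begin

(* The Grassmann envelope g, abstracted: a real normed space with a continuous Lie
   bracket br, a Z/4 grading given by projections pr 0..3 onto g_0..g_3 compatible
   with the bracket, and a continuous, symmetric, invariant, non-degenerate form fm
   with <g_n, g_m> = 0 unless n + m = 0 mod 4. *)
definition z4_graded_lie ::
  "('g::real_normed_vector \<Rightarrow> 'g \<Rightarrow> 'g) \<Rightarrow> ('g \<Rightarrow> 'g \<Rightarrow> complex) \<Rightarrow> (nat \<Rightarrow> 'g \<Rightarrow> 'g) \<Rightarrow> bool" where
  "z4_graded_lie br fm pr \<longleftrightarrow>
     bounded_bilinear br \<and>
     (\<forall>x y. br x y = - br y x) \<and>
     (\<forall>x y z. br x (br y z) = br (br x y) z + br y (br x z)) \<and>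
     (\<forall>k<4. bounded_linear (pr k)) \<and>
     (\<forall>j<4. \<forall>k<4. \<forall>x. pr j (pr k x) = (if j = k then pr k x else 0)) \<and>
     (\<forall>x. (\<Sum>k<4. pr k x) = x) \<and>
     (\<forall>j<4. \<forall>k<4. \<forall>x y. pr ((j + k) mod 4) (br (pr j x) (pr k y)) = br (pr j x) (pr k y)) \<and>
     bounded_bilinear fm \<and>
     (\<forall>x y. fm x y = fm y x) \<and>
     (\<forall>x y z. fm (br x y) z = fm x (br y z)) \<and>
     (\<forall>x. (\<forall>y. fm x y = 0) \<longrightarrow> x = 0) \<and>
     (\<forall>j<4. \<forall>k<4. \<forall>x y. (j + k) mod 4 \<noteq> 0 \<longrightarrow> fm (pr j x) (pr k y) = 0)"

definition gcomp :: "(nat \<Rightarrow> 'g \<Rightarrow> 'g) \<Rightarrow> int \<Rightarrow> 'g \<Rightarrow> 'g" where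
  "gcomp pr n x = pr (nat (n mod 4)) x"

definition smooth_S1 :: "(real \<Rightarrow> 'g::real_normed_vector) \<Rightarrow> bool" where
  "smooth_S1 f \<longleftrightarrow> (\<forall>t. f (t + 2 * pi) = f t) \<and>
     (\<exists>D. D 0 = f \<and> (\<forall>k t. (D k has_vector_derivative D (Suc k) t) (at t)))"

(* An element of \<G> = C^\<infinity>(S^1, Lg^\<Omega>) is represented by its coefficient functions:
   X n \<sigma> is the coefficient of z^n at the point \<sigma>. *)
definition in_G :: "(nat \<Rightarrow> 'g \<Rightarrow> 'g) \<Rightarrow> (int \<Rightarrow> real \<Rightarrow> 'g::real_normed_vector) \<Rightarrow> bool" where
  "in_G pr X \<longleftrightarrow> (\<forall>n. smooth_S1 (X n)) \<and> (\<forall>n \<sigma>. gcomp pr n (X n \<sigma>) = X n \<sigma>) \<and>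
     (\<exists>N. \<forall>n. n < - N \<longrightarrow> (\<forall>\<sigma>. X n \<sigma> = 0))"

definition loop_br :: "('g \<Rightarrow> 'g \<Rightarrow> 'g::comm_monoid_add) \<Rightarrow> (int \<Rightarrow> real \<Rightarrow> 'g) \<Rightarrow> (int \<Rightarrow> real \<Rightarrow> 'g) \<Rightarrow> int \<Rightarrow> real \<Rightarrow> 'g" where
  "loop_br br X Y n \<sigma> = Sum_any (\<lambda>m. br (X m \<sigma>) (Y (n - m) \<sigma>))"

definition Rop :: "(int \<Rightarrow> real \<Rightarrow> 'g::ab_group_add) \<Rightarrow> int \<Rightarrow> real \<Rightarrow> 'g" where
  "Rop X n \<sigma> = (if n \<ge> 0 then X n \<sigma> else - X n \<sigma>)"

definition dsig :: "(int \<Rightarrow> real \<Rightarrow> 'g::real_normed_vector) \<Rightarrow> int \<Rightarrow> real \<Rightarrow> 'g" where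
  "dsig X n \<sigma> = vector_derivative (X n) (at \<sigma>)"

(* coefficients of \<phi>(z) = 16 z^4 / (1 - z^4)^2 = \<Sum>_{j\<ge>0} 16 (j+1) z^{4j+4} *)
definition phi_c :: "int \<Rightarrow> complex" where
  "phi_c m = (if 4 \<le> m \<and> 4 dvd m then of_int (4 * m) else 0)"

(* (X,Y)_\<phi> = \<oint> dz/(2\<pi>i z) \<phi> <X,Y> = coefficient of z^0 in \<phi> <X,Y>, at the point \<sigma> *)
definition phi_pair :: "('g \<Rightarrow> 'g \<Rightarrow> complex) \<Rightarrow> (int \<Rightarrow> real \<Rightarrow> 'g) \<Rightarrow> (int \<Rightarrow> real \<Rightarrow> 'g) \<Rightarrow> real \<Rightarrow> complex" where
  "phi_pair fm X Y \<sigma> = Sum_any (\<lambda>m. phi_c m * Sum_any (\<lambda>n. fm (X n \<sigma>) (Y (- m - n) \<sigma>)))"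

definition G_pair :: "('g \<Rightarrow> 'g \<Rightarrow> complex) \<Rightarrow> (int \<Rightarrow> real \<Rightarrow> 'g) \<Rightarrow> (int \<Rightarrow> real \<Rightarrow> 'g) \<Rightarrow> complex" where
  "G_pair fm X Y = integral {0 .. 2 * pi} (phi_pair fm X Y)"

definition omega :: "('g \<Rightarrow> 'g \<Rightarrow> complex) \<Rightarrow> (int \<Rightarrow> real \<Rightarrow> 'g::real_normed_vector) \<Rightarrow> (int \<Rightarrow> real \<Rightarrow> 'g) \<Rightarrow> complex" where
  "omega fm X Y = integral {0 .. 2 * pi} (phi_pair fm X (dsig Y))"

definition hat_br :: "('g \<Rightarrow> 'g \<Rightarrow> 'g) \<Rightarrow> ('g \<Rightarrow> 'g \<Rightarrow> complex) \<Rightarrow>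
    (int \<Rightarrow> real \<Rightarrow> 'g::real_normed_vector) \<times> complex \<Rightarrow> (int \<Rightarrow> real \<Rightarrow> 'g) \<times> complex \<Rightarrow> (int \<Rightarrow> real \<Rightarrow> 'g) \<times> complex" where
  "hat_br br fm Xh Yh = (loop_br br (fst Xh) (fst Yh), omega fm (fst Xh) (fst Yh))"

definition hat_R :: "(int \<Rightarrow> real \<Rightarrow> 'g::ab_group_add) \<times> complex \<Rightarrow> (int \<Rightarrow> real \<Rightarrow> 'g) \<times> complex" where
  "hat_R Xh = (Rop (fst Xh), snd Xh)"

definition hat_brR :: "('g \<Rightarrow> 'g \<Rightarrow> 'g) \<Rightarrow> ('g \<Rightarrow> 'g \<Rightarrow> complex) \<Rightarrow>
    (int \<Rightarrow> real \<Rightarrow> 'g::real_normed_vector) \<times> complex \<Rightarrow> (int \<Rightarrow> real \<Rightarrow> 'g) \<times> complex \<Rightarrow> (int \<Rightarrow> real \<Rightarrow> 'g) \<times> complex" where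
  "hat_brR br fm Xh Yh =
     (let P = hat_br br fm (hat_R Xh) Yh; Q = hat_br br fm Xh (hat_R Yh)
      in ((\<lambda>n \<sigma>. (1/2) *\<^sub>R (fst P n \<sigma> + fst Q n \<sigma>)), (snd P + snd Q) / 2))"

definition hat_pair :: "('g \<Rightarrow> 'g \<Rightarrow> complex) \<Rightarrow> (int \<Rightarrow> real \<Rightarrow> 'g) \<times> complex \<Rightarrow> (int \<Rightarrow> real \<Rightarrow> 'g) \<times> complex \<Rightarrow> complex" where
  "hat_pair fm Lh Yh = G_pair fm (fst Lh) (fst Yh) + snd Lh * snd Yh"

(* multiplication by \<phi>(z)^{-1} = (z^{-4} - 2 + z^4)/16 *)
definition phi_inv_mul :: "(int \<Rightarrow> real \<Rightarrow> 'g::real_vector) \<Rightarrow> int \<Rightarrow> real \<Rightarrow> 'g" where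
  "phi_inv_mul \<psi> n \<sigma> = (1/16) *\<^sub>R (\<psi> (n + 4) \<sigma> - 2 *\<^sub>R \<psi> n \<sigma> + \<psi> (n - 4) \<sigma>)"

definition lax_series :: "(nat \<Rightarrow> 'g \<Rightarrow> 'g) \<Rightarrow> (real \<Rightarrow> 'g::real_vector) \<Rightarrow> (real \<Rightarrow> 'g) \<Rightarrow> int \<Rightarrow> real \<Rightarrow> 'g" where
  "lax_series pr A B k \<sigma> = (if k \<ge> 1 then of_int k *\<^sub>R gcomp pr k (A \<sigma>) + gcomp pr k (B \<sigma>) else 0)"

definition S_form :: "(nat \<Rightarrow> 'g \<Rightarrow> 'g) \<Rightarrow> (int \<Rightarrow> real \<Rightarrow> 'g::real_normed_vector) \<Rightarrow> bool" where
  "S_form pr L \<longleftrightarrow> (\<exists>A B. smooth_S1 A \<and> smooth_S1 B \<and> L = phi_inv_mul (lax_series pr A B))"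

definition S_set :: "(nat \<Rightarrow> 'g \<Rightarrow> 'g) \<Rightarrow> ((int \<Rightarrow> real \<Rightarrow> 'g::real_normed_vector) \<times> complex) set" where
  "S_set pr = {(L, 1) | L. S_form pr L}"

definition nabla1 :: "('g \<Rightarrow> 'g \<Rightarrow> 'g) \<Rightarrow> (real \<Rightarrow> 'g::real_normed_vector) \<Rightarrow> (real \<Rightarrow> 'g) \<Rightarrow> real \<Rightarrow> 'g" where
  "nabla1 br A1 P \<sigma> = vector_derivative P (at \<sigma>) - br (A1 \<sigma>) (P \<sigma>)"

definition lax_matrix :: "('g \<Rightarrow> 'g \<Rightarrow> 'g) \<Rightarrow> (nat \<Rightarrow> 'g \<Rightarrow> 'g) \<Rightarrow> (real \<Rightarrow> 'g::real_normed_vector) \<Rightarrow> (real \<Rightarrow> 'g) \<Rightarrow> int \<Rightarrow> real \<Rightarrow> 'g" where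
  "lax_matrix br pr A1 P1 n \<sigma> =
     4 *\<^sub>R phi_inv_mul (lax_series pr A1 (\<lambda>\<sigma>. 2 *\<^sub>R nabla1 br A1 P1 \<sigma>)) n \<sigma>"

end

theory Submission
  imports Defs
begin

text \<open>
  Write \<open>L = \<phi>^-1\<Lambda>\<close> with \<open>\<Lambda> = \<Sum>_{k\<ge>1} z^k (k A^(k) + B^(k))\<close>.  Pairing against
  \<open>\<phi>^-1\<Lambda>\<close> is the residue pairing \<open>\<Sum>_k \<langle>\<Lambda>_k, Y_{-k}\<rangle>\<close> with \<open>\<Lambda>\<close>, so only the negative modes of
  \<open>[M, Y]_R\<close> matter, and there \<open>[M, Y]_R = -[\<pi>_-M, \<pi>_-Y]\<close>.  Because \<open>\<phi>\<close> has only
  positive powers, the \<open>R\<close>-cocycle reduces to \<open>-\<integral>(\<pi>_-M, \<partial>_\<sigma>\<pi>_-Y)_\<phi>\<close>, which by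
  periodicity equals \<open>\<integral>(\<partial>_\<sigma>\<pi>_-M, \<pi>_-Y)_\<phi>\<close>.  As \<open>M\<close> has finitely many negative
  modes, both contributions are residue pairings with the series
  \<open>\<Lambda>'_p = \<Sum>_{m<0} [\<Lambda>_{p-m}, M_m] - \<phi>_{p-m} \<partial>_\<sigma>M_m\<close> (\<open>p \<ge> 1\<close>), and the grading makes
  \<open>\<Lambda>'\<close> again of the form \<open>\<Sum> z^p (p A'^(p) + B'^(p))\<close>.
\<close>

section \<open>Smooth functions on the line and on the circle\<close>

definition smooth :: "(real \<Rightarrow> 'a::real_normed_vector) \<Rightarrow> bool" where
  "smooth f \<longleftrightarrow> (\<exists>D. D 0 = f \<and> (\<forall>k t. (D k has_vector_derivative D (Suc k) t) (at t)))"

definition vderiv :: "(real \<Rightarrow> 'a::real_normed_vector) \<Rightarrow> real \<Rightarrow> 'a" where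
  "vderiv f t = vector_derivative f (at t)"

lemma smooth_S1_iff: "smooth_S1 f \<longleftrightarrow> (\<forall>t. f (t + 2 * pi) = f t) \<and> smooth f"
  unfolding smooth_S1_def smooth_def by simp

lemma smooth_coinduct:
  assumes "P h"
    and step: "\<And>h. P h \<Longrightarrow> \<exists>h'. P h' \<and> (\<forall>t. (h has_vector_derivative h' t) (at t))"
  shows "smooth h"
proof -
  define next_deriv where
    "next_deriv = (\<lambda>h. SOME h'. P h' \<and> (\<forall>t. (h has_vector_derivative h' t) (at t)))"
  have next_deriv: "P (next_deriv g) \<and> (\<forall>t. (g has_vector_derivative next_deriv g t) (at t))"
    if "P g" for g
    unfolding next_deriv_def using someI_ex[OF step[OF that]] by simp
  define D where "D k = (next_deriv ^^ k) h" for k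
  have PD: "P (D k)" for k by (induction k) (auto simp: D_def \<open>P h\<close> next_deriv)
  show ?thesis unfolding smooth_def
    by (rule exI[of _ D]) (auto simp: D_def next_deriv[OF PD[unfolded D_def]])
qed

lemma smooth_has_vderiv: "smooth f \<Longrightarrow> (f has_vector_derivative vderiv f t) (at t)"
  and smooth_vderiv: "smooth f \<Longrightarrow> smooth (vderiv f)"
proof -
  assume "smooth f"
  then obtain D where D0: "D 0 = f" and D: "\<And>k t. (D k has_vector_derivative D (Suc k) t) (at t)"
    unfolding smooth_def by blast
  have D1: "vderiv f = D 1"
    using D[of 0] D0 by (auto simp: vderiv_def fun_eq_iff intro!: vector_derivative_at)
  show "(f has_vector_derivative vderiv f t) (at t)" using D[of 0 t] D0 D1 by simp
  show "smooth (vderiv f)" unfolding smooth_def D1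
    by (rule exI[of _ "\<lambda>k. D (Suc k)"]) (simp add: D)
qed

lemma smooth_continuous_on: "smooth f \<Longrightarrow> continuous_on S f"
  by (rule continuous_on_vector_derivative)
    (auto intro: has_vector_derivative_at_within smooth_has_vderiv)

lemma smooth_const: "smooth (\<lambda>t. c)"
  by (rule smooth_coinduct[where P="\<lambda>h. \<exists>c. h = (\<lambda>t. c)"]) (auto intro!: exI[of _ "\<lambda>t. 0"])

lemma smooth_add: "smooth f \<Longrightarrow> smooth g \<Longrightarrow> smooth (\<lambda>t. f t + g t)"
proof (rule smooth_coinduct[where P="\<lambda>h. \<exists>f g. smooth f \<and> smooth g \<and> h = (\<lambda>t. f t + g t)"])
  fix h assume "\<exists>f g. smooth f \<and> smooth g \<and> h = (\<lambda>t. f t + g t)"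
  then obtain u v where "smooth u" "smooth v" "h = (\<lambda>t. u t + v t)" by blast
  then show "\<exists>h'. (\<exists>f g. smooth f \<and> smooth g \<and> h' = (\<lambda>t. f t + g t)) \<and>
      (\<forall>t. (h has_vector_derivative h' t) (at t))"
    by (intro exI[of _ "\<lambda>t. vderiv u t + vderiv v t"])
      (auto intro!: has_vector_derivative_add smooth_has_vderiv smooth_vderiv)
qed blast

lemma smooth_linear: "bounded_linear L \<Longrightarrow> smooth f \<Longrightarrow> smooth (\<lambda>t. L (f t))"
proof (rule smooth_coinduct[where P="\<lambda>h. \<exists>f. smooth f \<and> h = (\<lambda>t. L (f t))"])
  fix h assume L: "bounded_linear L" and "\<exists>f. smooth f \<and> h = (\<lambda>t. L (f t))"
  then obtain u where "smooth u" "h = (\<lambda>t. L (u t))" by blast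
  then show "\<exists>h'. (\<exists>f. smooth f \<and> h' = (\<lambda>t. L (f t))) \<and>
      (\<forall>t. (h has_vector_derivative h' t) (at t))"
    by (intro exI[of _ "\<lambda>t. L (vderiv u t)"])
      (auto intro!: bounded_linear.has_vector_derivative[OF L] smooth_has_vderiv smooth_vderiv)
qed blast

lemma smooth_scaleR: "smooth f \<Longrightarrow> smooth (\<lambda>t. c *\<^sub>R f t)"
  using smooth_linear[OF bounded_linear_scaleR_right] .

lemma smooth_minus: "smooth f \<Longrightarrow> smooth (\<lambda>t. - f t)"
  using smooth_scaleR[of f "-1"] by simp

lemma smooth_diff: "smooth f \<Longrightarrow> smooth g \<Longrightarrow> smooth (\<lambda>t. f t - g t)"
  using smooth_add[OF _ smooth_minus, of f g] by simp

text \<open>Leibniz' rule is iterated by tracking the derivative of a product as a finite list of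
  products of smooth factors.\<close>

lemma smooth_bilinear:
  fixes prod :: "'a::real_normed_vector \<Rightarrow> 'b::real_normed_vector \<Rightarrow> 'c::real_normed_vector"
  assumes bb: "bounded_bilinear prod" and "smooth f" "smooth g"
  shows "smooth (\<lambda>t. prod (f t) (g t))"
proof -
  let ?P = "\<lambda>h. \<exists>ps. (\<forall>p\<in>set ps. smooth (fst p) \<and> smooth (snd p)) \<and>
              h = (\<lambda>t. \<Sum>p\<leftarrow>ps. prod (fst p t) (snd p t))"
  have "?P (\<lambda>t. prod (f t) (g t))"
    by (rule exI[of _ "[(f, g)]"]) (simp add: assms)
  then show ?thesis
  proof (rule smooth_coinduct)
    fix h assume "?P h"
    then obtain ps where ps: "\<forall>p\<in>set ps. smooth (fst p) \<and> smooth (snd p)"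
      and h: "h = (\<lambda>t. \<Sum>p\<leftarrow>ps. prod (fst p t) (snd p t))" by blast
    define qs where
      "qs = concat (map (\<lambda>p. [(fst p, vderiv (snd p)), (vderiv (fst p), snd p)]) ps)"
    have "?P (\<lambda>t. \<Sum>p\<leftarrow>qs. prod (fst p t) (snd p t))"
      using ps by (auto simp: qs_def intro!: exI[of _ qs] smooth_vderiv)
    moreover have "(h has_vector_derivative (\<Sum>p\<leftarrow>qs. prod (fst p t) (snd p t))) (at t)" for t
      unfolding h qs_def using ps
    proof (induction ps)
      case (Cons p ps)
      have "((\<lambda>t. prod (fst p t) (snd p t)) has_vector_derivative
              prod (fst p t) (vderiv (snd p) t) + prod (vderiv (fst p) t) (snd p t)) (at t)"
        using Cons.prems
        by (auto intro!: bounded_bilinear.has_vector_derivative[OF bb] smooth_has_vderiv)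
      from has_vector_derivative_add[OF this Cons.IH] Cons.prems show ?case
        by (simp add: add.assoc)
    qed simp
    ultimately show "\<exists>h'. ?P h' \<and> (\<forall>t. (h has_vector_derivative h' t) (at t))" by blast
  qed
qed

lemma vderiv_periodic:
  assumes "smooth f" and periodic: "\<And>t. f (t + 2 * pi) = f t"
  shows "vderiv f (t + 2 * pi) = vderiv f t"
proof -
  have shift: "((\<lambda>s. s + 2 * pi) has_vector_derivative 1) (at t)"
    by (auto intro!: derivative_eq_intros)
  have "((f \<circ> (\<lambda>s. s + 2 * pi)) has_vector_derivative (1 *\<^sub>R vderiv f (t + 2 * pi))) (at t)"
    by (rule vector_diff_chain_at[OF shift]) (simp add: smooth_has_vderiv[OF \<open>smooth f\<close>])
  moreover have "f \<circ> (\<lambda>s. s + 2 * pi) = f" using periodic by (simp add: o_def)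
  ultimately have "(f has_vector_derivative vderiv f (t + 2 * pi)) (at t)" by simp
  from vector_derivative_unique_at[OF this smooth_has_vderiv[OF \<open>smooth f\<close>]] show ?thesis .
qed

lemma smooth_S1_smooth: "smooth_S1 f \<Longrightarrow> smooth f"
  and smooth_S1_periodic: "smooth_S1 f \<Longrightarrow> f (t + 2 * pi) = f t"
  by (simp_all add: smooth_S1_iff)

lemma smooth_S1_vderiv: "smooth_S1 f \<Longrightarrow> smooth_S1 (vderiv f)"
  unfolding smooth_S1_iff by (auto intro: vderiv_periodic smooth_vderiv)

lemma smooth_S1_const: "smooth_S1 (\<lambda>t. c)"
  and smooth_S1_add: "smooth_S1 f \<Longrightarrow> smooth_S1 g \<Longrightarrow> smooth_S1 (\<lambda>t. f t + g t)"
  and smooth_S1_diff: "smooth_S1 f \<Longrightarrow> smooth_S1 g \<Longrightarrow> smooth_S1 (\<lambda>t. f t - g t)"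
  and smooth_S1_scaleR: "smooth_S1 f \<Longrightarrow> smooth_S1 (\<lambda>t. r *\<^sub>R f t)"
  and smooth_S1_minus: "smooth_S1 f \<Longrightarrow> smooth_S1 (\<lambda>t. - f t)"
  and smooth_S1_linear: "bounded_linear L \<Longrightarrow> smooth_S1 f \<Longrightarrow> smooth_S1 (\<lambda>t. L (f t))"
  and smooth_S1_bilinear:
    "bounded_bilinear P \<Longrightarrow> smooth_S1 f \<Longrightarrow> smooth_S1 g \<Longrightarrow> smooth_S1 (\<lambda>t. P (f t) (g t))"
  unfolding smooth_S1_iff
  by (auto intro: smooth_const smooth_add smooth_diff smooth_scaleR smooth_minus smooth_linear
      smooth_bilinear)

lemma smooth_S1_sum:
  "finite I \<Longrightarrow> (\<And>i. i \<in> I \<Longrightarrow> smooth_S1 (f i)) \<Longrightarrow> smooth_S1 (\<lambda>t. \<Sum>i\<in>I. f i t)"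
  by (induction I rule: finite_induct) (auto intro: smooth_S1_const smooth_S1_add)

lemma vderiv_zero:
  assumes "\<And>t. f t = 0"
  shows "vderiv f t = 0"
proof -
  have "f = (\<lambda>t. 0)" using assms by auto
  then show ?thesis unfolding vderiv_def by (auto intro!: vector_derivative_at)
qed

section \<open>Finitely supported sums over the integers\<close>

lemma Sum_any_shift: "Sum_any (\<lambda>k. g (k - c)) = Sum_any (\<lambda>k::int. g k)"
proof -
  have "bij (\<lambda>k::int. k - c)" by (intro bij_betw_byWitness[where f'="\<lambda>k. k + c"]) auto
  then have "Sum_any g = Sum_any (\<lambda>k. g (k - c))"
    by (rule Sum_any.reindex_cong) (simp add: o_def)
  then show ?thesis by simp
qed

lemma Sum_any_swap_finite:
  assumes "finite {(a, b). g a b \<noteq> 0}"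
  shows "Sum_any (\<lambda>a. Sum_any (\<lambda>b. g a b)) = Sum_any (\<lambda>b. Sum_any (\<lambda>a. g a b))"
proof (rule Sum_any.swap)
  let ?S = "{(a, b). g a b \<noteq> 0}"
  show "finite (fst ` ?S \<times> snd ` ?S)" using assms by auto
  show "{a. \<exists>b. g a b \<noteq> 0} \<times> {b. \<exists>a. g a b \<noteq> 0} \<subseteq> fst ` ?S \<times> snd ` ?S"
    by (auto simp: image_iff)
qed

lemma Sum_any_shear:
  fixes G :: "int \<Rightarrow> int \<Rightarrow> 'c::comm_monoid_add"
  assumes fin: "finite {(a, b). G a b \<noteq> 0}"
  shows "Sum_any (\<lambda>a. Sum_any (\<lambda>b. G a b)) = Sum_any (\<lambda>p. Sum_any (\<lambda>b. G (p - b) b))"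
proof -
  have "Sum_any (\<lambda>a. Sum_any (\<lambda>b. G a b)) = Sum_any (\<lambda>b. Sum_any (\<lambda>a. G a b))"
    by (rule Sum_any_swap_finite[OF fin])
  also have "\<dots> = Sum_any (\<lambda>b. Sum_any (\<lambda>p. G (p - b) b))"
    by (simp only: Sum_any_shift[of "\<lambda>a. G a _"])
  also have "\<dots> = Sum_any (\<lambda>p. Sum_any (\<lambda>b. G (p - b) b))"
  proof (rule Sum_any_swap_finite)
    have "{(b, p). G (p - b) b \<noteq> 0} \<subseteq> (\<lambda>(a, b). (b, a + b)) ` {(a, b). G a b \<noteq> 0}"
      by (auto simp: image_iff) (metis diff_add_cancel)
    then show "finite {(b, p). G (p - b) b \<noteq> 0}" using finite_subset fin by blast
  qed
  finally show ?thesis .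
qed

lemma finite_support_int_box:
  "(\<And>n. g n \<noteq> 0 \<Longrightarrow> lo \<le> n \<and> n \<le> hi) \<Longrightarrow> finite {n::int. g n \<noteq> 0}"
  by (rule finite_subset[of _ "{lo..hi}"]) auto

lemma finite_support_int_box2:
  "(\<And>a b. g a b \<noteq> 0 \<Longrightarrow> lo \<le> a \<and> a \<le> hi \<and> lo' \<le> b \<and> b \<le> hi') \<Longrightarrow>
    finite {(a::int, b::int). g a b \<noteq> 0}"
  by (rule finite_subset[of _ "{lo..hi} \<times> {lo'..hi'}"]) auto

lemma Sum_any_eq_sum: "finite A \<Longrightarrow> (\<And>n. g n \<noteq> 0 \<Longrightarrow> n \<in> A) \<Longrightarrow> Sum_any g = sum g A"
  by (rule Sum_any.expand_superset) auto

lemma Sum_any_linear: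
  assumes f: "bounded_linear f" and fin: "finite {a. g a \<noteq> 0}"
  shows "f (Sum_any g) = Sum_any (\<lambda>a. f (g a))"
proof -
  have "Sum_any g = sum g {a. g a \<noteq> 0}" by (rule Sum_any_eq_sum[OF fin]) auto
  moreover have "Sum_any (\<lambda>a. f (g a)) = sum (\<lambda>a. f (g a)) {a. g a \<noteq> 0}"
    by (rule Sum_any_eq_sum[OF fin]) (auto simp: linear_simps[OF f])
  ultimately show ?thesis by (simp add: linear_sum[OF bounded_linear.linear[OF f]])
qed

lemma Sum_any_diff:
  fixes g h :: "'a \<Rightarrow> 'b::ab_group_add"
  assumes "finite {a. g a \<noteq> 0}" "finite {a. h a \<noteq> 0}"
  shows "Sum_any (\<lambda>a. g a - h a) = Sum_any g - Sum_any h"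
proof -
  let ?S = "{a. g a \<noteq> 0} \<union> {a. h a \<noteq> 0}"
  have fin: "finite ?S" using assms by simp
  have "Sum_any (\<lambda>a. g a - h a) = sum (\<lambda>a. g a - h a) ?S" by (rule Sum_any_eq_sum[OF fin]) auto
  moreover have "Sum_any g = sum g ?S" by (rule Sum_any_eq_sum[OF fin]) auto
  moreover have "Sum_any h = sum h ?S" by (rule Sum_any_eq_sum[OF fin]) auto
  ultimately show ?thesis by (simp add: sum_subtractf)
qed

lemma Sum_any_uminus: "Sum_any (\<lambda>a. - g a) = - Sum_any (g :: 'a \<Rightarrow> 'b::ab_group_add)"
proof (cases "finite {a. g a \<noteq> 0}")
  case True
  have "Sum_any (\<lambda>a. - g a) = sum (\<lambda>a. - g a) {a. g a \<noteq> 0}" by (rule Sum_any_eq_sum[OF True]) auto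
  moreover have "Sum_any g = sum g {a. g a \<noteq> 0}" by (rule Sum_any_eq_sum[OF True]) auto
  ultimately show ?thesis by (simp add: sum_negf)
next
  case False
  then show ?thesis by (simp add: Sum_any.infinite)
qed

lemma Sum_any_divide:
  fixes g :: "'a \<Rightarrow> 'b::field"
  assumes fin: "finite {a. g a \<noteq> 0}"
  shows "Sum_any (\<lambda>n. g n / c) = Sum_any g / c"
proof -
  have "Sum_any (\<lambda>n. g n / c) = sum (\<lambda>n. g n / c) {a. g a \<noteq> 0}"
    by (rule Sum_any_eq_sum[OF fin]) auto
  moreover have "Sum_any g = sum g {a. g a \<noteq> 0}" by (rule Sum_any_eq_sum[OF fin]) auto
  ultimately show ?thesis by (simp add: sum_divide_distrib)
qed

section \<open>Laurent series in the loop variable\<close>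

text \<open>The coefficients of \<open>\<phi>\<close> as reals, so that they can act on \<open>g\<close> by scaling.\<close>

definition phi_r :: "int \<Rightarrow> real" where
  "phi_r m = (if 4 \<le> m \<and> 4 dvd m then 4 * of_int m else 0)"

lemma phi_c_eq_phi_r: "phi_c m = complex_of_real (phi_r m)"
  by (simp add: phi_c_def phi_r_def)

lemma phi_r_eq: "2 \<le> q \<Longrightarrow> phi_r q = (if 4 dvd q then 4 * of_int q else 0)"
  by (auto simp: phi_r_def elim!: dvdE)

lemma sum_phi_second_difference:
  fixes S :: "int \<Rightarrow> complex"
  shows "(\<Sum>i\<in>{1..K}. of_nat i * (S (4 * int i - 4) - 2 * S (4 * int i) + S (4 * int i + 4)))
     = S 0 - of_nat (K + 1) * S (4 * int K) + of_nat K * S (4 * int K + 4)"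
proof (induction K)
  case (Suc K)
  have "4 * int (Suc K) - 4 = 4 * int K" "4 * int (Suc K) = 4 * int K + 4"
    "4 * int (Suc K) + 4 = 4 * int K + 8" by auto
  with Suc show ?case by (simp add: algebra_simps)
qed simp

text \<open>\<open>\<phi> \<cdot> (z^-4 - 2 + z^4)/16 = 1\<close>, read off at \<open>z^0\<close> for a series \<open>S\<close> with finitely many
  positive modes: the sum telescopes to \<open>S 0\<close>.\<close>

lemma Sum_any_phi_second_difference:
  fixes S :: "int \<Rightarrow> complex"
  assumes S: "\<And>m. m \<ge> B \<Longrightarrow> S m = 0"
  shows "Sum_any (\<lambda>m. phi_c m * ((S (m - 4) - 2 * S m + S (m + 4)) / 16)) = S 0"
proof -
  define K where "K = nat B + 1"
  let ?A = "(\<lambda>i. 4 * int i) ` {1..K}"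
  have "Sum_any (\<lambda>m. phi_c m * ((S (m - 4) - 2 * S m + S (m + 4)) / 16))
      = sum (\<lambda>m. phi_c m * ((S (m - 4) - 2 * S m + S (m + 4)) / 16)) ?A"
  proof (rule Sum_any_eq_sum)
    fix m assume nz: "phi_c m * ((S (m - 4) - 2 * S m + S (m + 4)) / 16) \<noteq> 0"
    then have m4: "4 \<le> m" "4 dvd m" by (auto simp: phi_c_def split: if_splits)
    from m4(2) obtain q where q: "m = 4 * q" by (elim dvdE)
    with m4(1) obtain i where i: "m = 4 * int i" "i \<ge> 1" by (intro that[of "nat q"]) auto
    have "i \<le> K"
    proof (rule ccontr)
      assume "\<not> i \<le> K"
      then have "m - 4 \<ge> B" "m \<ge> B" "m + 4 \<ge> B" using i unfolding K_def by auto
      then show False using nz S by simp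
    qed
    with i show "m \<in> ?A" by auto
  qed simp
  also have "\<dots> = (\<Sum>i\<in>{1..K}. of_nat i *
      (S (4 * int i - 4) - 2 * S (4 * int i) + S (4 * int i + 4)))"
    by (subst sum.reindex) (auto simp: inj_on_def phi_c_def)
  also have "\<dots> = S 0"
    unfolding sum_phi_second_difference using S[of "4 * int K"] S[of "4 * int K + 4"]
    unfolding K_def by simp
  finally show ?thesis .
qed

lemma Sum_any_phi_c_eq_sum:
  assumes g: "\<And>m n. g m n \<noteq> 0 \<Longrightarrow> - a \<le> n \<and> - b \<le> - m - n"
  shows "Sum_any (\<lambda>m. phi_c m * Sum_any (g m)) =
    (\<Sum>m\<in>{4..a+b}. phi_c m * (\<Sum>n\<in>{-a..b}. g m n))"
proof -
  have "Sum_any (\<lambda>m. phi_c m * Sum_any (g m)) = (\<Sum>m\<in>{4..a+b}. phi_c m * Sum_any (g m))"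
  proof (rule Sum_any_eq_sum)
    fix m assume nz: "phi_c m * Sum_any (g m) \<noteq> 0"
    then have "4 \<le> m" by (auto simp: phi_c_def split: if_splits)
    moreover from nz obtain n where "g m n \<noteq> 0"
      by (auto elim: Sum_any.not_neutral_obtains_not_neutral)
    then have "m \<le> a + b" using g by fastforce
    ultimately show "m \<in> {4..a+b}" by simp
  qed simp
  also have "\<dots> = (\<Sum>m\<in>{4..a+b}. phi_c m * (\<Sum>n\<in>{-a..b}. g m n))"
  proof (rule sum.cong[OF refl])
    fix m :: int assume m: "m \<in> {4..a+b}"
    have "Sum_any (g m) = (\<Sum>n\<in>{-a..b}. g m n)"
      by (rule Sum_any_eq_sum) (use g m in fastforce)+
    then show "phi_c m * Sum_any (g m) = phi_c m * (\<Sum>n\<in>{-a..b}. g m n)" by simp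
  qed
  finally show ?thesis .
qed

lemma finite_support_phi_c:
  assumes "\<And>m n. g m n \<noteq> 0 \<Longrightarrow> - a \<le> n \<and> - b \<le> - m - n"
  shows "finite {m. phi_c m * Sum_any (g m) \<noteq> 0}"
proof (rule finite_support_int_box[of _ 4 "a + b"])
  fix m assume nz: "phi_c m * Sum_any (g m) \<noteq> 0"
  then have "4 \<le> m" by (auto simp: phi_c_def split: if_splits)
  moreover from nz obtain n where "g m n \<noteq> 0"
    by (auto elim: Sum_any.not_neutral_obtains_not_neutral)
  then have "m \<le> a + b" using assms by fastforce
  ultimately show "4 \<le> m \<and> m \<le> a + b" by simp
qed

lemma lax_series_nonpos: "k \<le> 0 \<Longrightarrow> lax_series pr A B k \<sigma> = 0"
  by (simp add: lax_series_def)

definition neg_part :: "(int \<Rightarrow> real \<Rightarrow> 'g::zero) \<Rightarrow> int \<Rightarrow> real \<Rightarrow> 'g" where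
  "neg_part X n \<sigma> = (if n < 0 then X n \<sigma> else 0)"

lemma Rop_fun: "Rop X n = (if n \<ge> 0 then X n else (\<lambda>t. - X n t))"
  by (auto simp: Rop_def fun_eq_iff)

lemma dsig_eq_vderiv: "dsig X n = vderiv (X n)"
  by (simp add: dsig_def vderiv_def fun_eq_iff)

lemma dsig_Rop:
  assumes "\<And>n. smooth (X n)"
  shows "dsig (Rop X) = Rop (dsig X)"
proof (intro ext)
  fix n t
  have "((\<lambda>t. - X n t) has_vector_derivative - vderiv (X n) t) (at t)"
    by (rule has_vector_derivative_minus[OF smooth_has_vderiv[OF assms]])
  then show "dsig (Rop X) n t = Rop (dsig X) n t"
    by (simp add: dsig_def Rop_fun Rop_def vector_derivative_at vderiv_def)
qed

lemma smooth_S1_Rop: "(\<And>n. smooth_S1 (X n)) \<Longrightarrow> smooth_S1 (Rop X n)"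
  unfolding Rop_fun by (auto intro: smooth_S1_minus)

lemma smooth_S1_phi_inv_mul:
  assumes "\<And>k. smooth_S1 (F k)"
  shows "smooth_S1 (phi_inv_mul F n)"
proof -
  have "phi_inv_mul F n = (\<lambda>\<sigma>. (1/16) *\<^sub>R (F (n + 4) \<sigma> - 2 *\<^sub>R F n \<sigma> + F (n - 4) \<sigma>))"
    by (simp add: phi_inv_mul_def fun_eq_iff)
  then show ?thesis by (simp only:) (intro smooth_S1_scaleR smooth_S1_add smooth_S1_diff assms)
qed

lemma loop_br_eq_sum:
  fixes X Y :: "int \<Rightarrow> real \<Rightarrow> 'g::real_normed_vector"
  assumes "bounded_bilinear br"
    and X0: "\<And>m \<sigma>. m < - a \<Longrightarrow> X m \<sigma> = 0" and Y0: "\<And>m \<sigma>. m < - b \<Longrightarrow> Y m \<sigma> = 0"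
  shows "loop_br br X Y n \<sigma> = (\<Sum>m\<in>{-a..n+b}. br (X m \<sigma>) (Y (n - m) \<sigma>))"
proof -
  interpret bounded_bilinear br by fact
  show ?thesis unfolding loop_br_def
    apply (rule Sum_any_eq_sum, simp)
    subgoal for m by (cases "m < - a"; cases "n - m < - b") (auto simp: X0 Y0 zero_left zero_right)
    done
qed

lemma loop_br_below:
  fixes X Y :: "int \<Rightarrow> real \<Rightarrow> 'g::real_normed_vector"
  assumes "bounded_bilinear br"
    and X0: "\<And>m \<sigma>. m < - a \<Longrightarrow> X m \<sigma> = 0" and Y0: "\<And>m \<sigma>. m < - b \<Longrightarrow> Y m \<sigma> = 0"
    and n: "n < - a - b"
  shows "loop_br br X Y n \<sigma> = 0"
proof -
  interpret bounded_bilinear br by fact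
  have "br (X m \<sigma>) (Y (n - m) \<sigma>) = 0" for m
    using n X0[of m] Y0[of "n - m"] by (cases "m < - a") (auto simp: zero_left zero_right)
  then show ?thesis unfolding loop_br_def by simp
qed

lemma smooth_S1_loop_br:
  fixes X Y :: "int \<Rightarrow> real \<Rightarrow> 'g::real_normed_vector"
  assumes bb: "bounded_bilinear br"
    and X0: "\<And>m \<sigma>. m < - a \<Longrightarrow> X m \<sigma> = 0" and Y0: "\<And>m \<sigma>. m < - b \<Longrightarrow> Y m \<sigma> = 0"
    and "\<And>m. smooth_S1 (X m)" "\<And>m. smooth_S1 (Y m)"
  shows "smooth_S1 (loop_br br X Y n)"
proof -
  have "loop_br br X Y n = (\<lambda>\<sigma>. \<Sum>m\<in>{-a..n+b}. br (X m \<sigma>) (Y (n - m) \<sigma>))"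
    using loop_br_eq_sum[OF bb X0 Y0] by (simp add: fun_eq_iff)
  then show ?thesis
    by (simp only:) (intro smooth_S1_sum smooth_S1_bilinear[OF bb] assms finite_atLeastAtMost_int)
qed

lemma in_G_bound: "in_G pr X \<Longrightarrow> \<exists>N. \<forall>n \<sigma>. n < - N \<longrightarrow> X n \<sigma> = 0"
  unfolding in_G_def by blast

lemma in_G_smooth: "in_G pr X \<Longrightarrow> smooth_S1 (X n)"
  and in_G_graded: "in_G pr X \<Longrightarrow> gcomp pr n (X n \<sigma>) = X n \<sigma>"
  unfolding in_G_def by auto

lemma hat_brR_eq:
  "hat_brR br fm (M, c) (Y, b) =
    ((\<lambda>n \<sigma>. (1/2) *\<^sub>R (loop_br br (Rop M) Y n \<sigma> + loop_br br M (Rop Y) n \<sigma>)),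
     (omega fm (Rop M) Y + omega fm M (Rop Y)) / 2)"
  by (simp add: hat_brR_def hat_br_def hat_R_def Let_def)

lemma nat_mod4_add_eq_iff:
  assumes "(j::nat) < 4"
  shows "nat (p mod 4) = (j + nat (m mod 4)) mod 4 \<longleftrightarrow> j = nat ((p - (m::int)) mod 4)"
proof -
  have "nat (p mod 4) = (j + nat (m mod 4)) mod 4 \<longleftrightarrow> p mod 4 = (int j + m mod 4) mod 4"
    by (simp add: nat_eq_iff zmod_int of_nat_mod)
  also have "\<dots> \<longleftrightarrow> 4 dvd ((p - m) - int j)"
    by (simp add: mod_add_right_eq mod_eq_dvd_iff algebra_simps)
  also have "\<dots> \<longleftrightarrow> (p - m) mod 4 = int j mod 4" by (simp add: mod_eq_dvd_iff)
  also have "\<dots> \<longleftrightarrow> (p - m) mod 4 = int j" using assms by simp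
  also have "\<dots> \<longleftrightarrow> j = nat ((p - m) mod 4)" by auto
  finally show ?thesis .
qed

section \<open>The \<open>\<int>/4\<close>-graded Lie algebra\<close>

locale z4_lie =
  fixes br :: "'g::real_normed_vector \<Rightarrow> 'g \<Rightarrow> 'g"
    and fm :: "'g \<Rightarrow> 'g \<Rightarrow> complex"
    and pr :: "nat \<Rightarrow> 'g \<Rightarrow> 'g"
  assumes z4_graded_lie: "z4_graded_lie br fm pr"
begin

lemma z4_graded_lie_laws:
  "bounded_bilinear br \<and> bounded_bilinear fm \<and>
   (\<forall>x y z. fm (br x y) z = fm x (br y z)) \<and> (\<forall>k<4. bounded_linear (pr k)) \<and>
   (\<forall>j<4. \<forall>k<4. \<forall>x. pr j (pr k x) = (if j = k then pr k x else 0)) \<and>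
   (\<forall>x. (\<Sum>k<4. pr k x) = x) \<and>
   (\<forall>j<4. \<forall>k<4. \<forall>x y. pr ((j + k) mod 4) (br (pr j x) (pr k y)) = br (pr j x) (pr k y))"
  using z4_graded_lie unfolding z4_graded_lie_def by (elim conjE) (intro conjI; assumption)

lemma bounded_bilinear_br: "bounded_bilinear br"
  and bounded_bilinear_fm: "bounded_bilinear fm"
  and fm_invariant: "fm (br x y) z = fm x (br y z)"
  and bounded_linear_pr: "k < 4 \<Longrightarrow> bounded_linear (pr k)"
  and pr_pr: "j < 4 \<Longrightarrow> k < 4 \<Longrightarrow> pr j (pr k x) = (if j = k then pr k x else 0)"
  and sum_pr: "(\<Sum>k<4. pr k x) = x"
  and pr_br: "j < 4 \<Longrightarrow> k < 4 \<Longrightarrow> pr ((j + k) mod 4) (br (pr j x) (pr k y)) = br (pr j x) (pr k y)"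
  using z4_graded_lie_laws by blast+

sublocale br: bounded_bilinear br by (rule bounded_bilinear_br)
sublocale fm: bounded_bilinear fm by (rule bounded_bilinear_fm)

lemmas [simp] = fm.zero_left fm.zero_right br.zero_left br.zero_right

lemma fm_scaleR_left: "fm (c *\<^sub>R x) y = complex_of_real c * fm x y"
  by (simp add: fm.scaleR_left scaleR_conv_of_real)

lemma bounded_linear_gcomp: "bounded_linear (gcomp pr n)"
  unfolding gcomp_def[abs_def] by (rule bounded_linear_pr) simp

lemma gcomp_gcomp: "gcomp pr p (gcomp pr m x) = (if 4 dvd (p - m) then gcomp pr m x else 0)"
proof -
  have "nat (p mod 4) = nat (m mod 4) \<longleftrightarrow> 4 dvd (p - m)"
    by (simp add: eq_nat_nat_iff mod_eq_dvd_iff)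
  moreover have "nat (p mod 4) < 4" "nat (m mod 4) < 4" by (simp_all add: nat_less_iff)
  ultimately show ?thesis unfolding gcomp_def by (simp add: pr_pr)
qed

lemma gcomp_br: "gcomp pr p (br x (gcomp pr m y)) = br (gcomp pr (p - m) x) (gcomp pr m y)"
proof -
  let ?q = "nat (m mod 4)" and ?r = "nat (p mod 4)" and ?j0 = "nat ((p - m) mod 4)"
  have q4: "?q < 4" and r4: "?r < 4" and j4: "?j0 < 4" by (simp_all add: nat_less_iff)
  have component: "pr ?r (br (pr j x) (pr ?q y)) = (if j = ?j0 then br (pr j x) (pr ?q y) else 0)"
    if j: "j < 4" for j
  proof -
    have "pr ?r (br (pr j x) (pr ?q y)) = pr ?r (pr ((j + ?q) mod 4) (br (pr j x) (pr ?q y)))"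
      using j q4 pr_br by simp
    also have "\<dots> = (if ?r = (j + ?q) mod 4 then pr ((j + ?q) mod 4) (br (pr j x) (pr ?q y)) else 0)"
      by (rule pr_pr[OF r4]) simp
    also have "\<dots> = (if ?r = (j + ?q) mod 4 then br (pr j x) (pr ?q y) else 0)"
      using j q4 pr_br by simp
    finally show ?thesis using nat_mod4_add_eq_iff[OF j] by simp
  qed
  have "br x (pr ?q y) = (\<Sum>j<4. br (pr j x) (pr ?q y))"
    by (subst (1) sum_pr[symmetric, of x]) (simp add: br.sum_left)
  then have "pr ?r (br x (pr ?q y)) = (\<Sum>j<4. pr ?r (br (pr j x) (pr ?q y)))"
    using linear_sum[OF bounded_linear.linear[OF bounded_linear_pr[OF r4]]] by simp
  also have "\<dots> = br (pr ?j0 x) (pr ?q y)"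
    using j4 by (simp add: component)
  finally show ?thesis unfolding gcomp_def .
qed

lemma gcomp_vderiv:
  assumes "smooth f" and graded: "\<And>t. gcomp pr m (f t) = f t"
  shows "gcomp pr m (vderiv f t) = vderiv f t"
proof -
  have "((\<lambda>t. gcomp pr m (f t)) has_vector_derivative gcomp pr m (vderiv f t)) (at t)"
    by (rule bounded_linear.has_vector_derivative[OF bounded_linear_gcomp
        smooth_has_vderiv[OF \<open>smooth f\<close>]])
  then have "(f has_vector_derivative gcomp pr m (vderiv f t)) (at t)" using graded by simp
  from vector_derivative_unique_at[OF this smooth_has_vderiv[OF \<open>smooth f\<close>]] show ?thesis .
qed

lemma smooth_S1_lax_series:
  assumes "smooth_S1 A" "smooth_S1 B"
  shows "smooth_S1 (lax_series pr A B k)"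
proof (cases "1 \<le> k")
  case True
  then have "lax_series pr A B k = (\<lambda>\<sigma>. of_int k *\<^sub>R gcomp pr k (A \<sigma>) + gcomp pr k (B \<sigma>))"
    by (simp add: lax_series_def fun_eq_iff)
  then show ?thesis
    by (simp only:) (intro smooth_S1_add smooth_S1_scaleR smooth_S1_linear[OF bounded_linear_gcomp] assms)
next
  case False
  then have "lax_series pr A B k = (\<lambda>\<sigma>. 0)" by (simp add: lax_series_def fun_eq_iff)
  then show ?thesis by (simp add: smooth_S1_const)
qed

section \<open>The pairing \<open>(\<cdot>, \<cdot>)\<^sub>\<phi>\<close>\<close>

lemma continuous_on_phi_pair:
  assumes cX: "\<And>n. continuous_on UNIV (X n)" and cY: "\<And>n. continuous_on UNIV (Y n)"
    and X0: "\<And>n \<sigma>. n < - a \<Longrightarrow> X n \<sigma> = 0" and Y0: "\<And>n \<sigma>. n < - b \<Longrightarrow> Y n \<sigma> = 0"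
  shows "continuous_on S (phi_pair fm X Y)"
proof -
  have "phi_pair fm X Y =
      (\<lambda>\<sigma>. \<Sum>m\<in>{4..a+b}. phi_c m * (\<Sum>n\<in>{-a..b}. fm (X n \<sigma>) (Y (- m - n) \<sigma>)))"
    unfolding phi_pair_def
    apply (intro ext Sum_any_phi_c_eq_sum)
    subgoal for \<sigma> m n by (cases "n < - a"; cases "- m - n < - b") (auto simp: X0 Y0)
    done
  moreover have "continuous_on S
      (\<lambda>\<sigma>. \<Sum>m\<in>{4..a+b}. phi_c m * (\<Sum>n\<in>{-a..b}. fm (X n \<sigma>) (Y (- m - n) \<sigma>)))"
    by (intro continuous_on_sum continuous_on_mult_left fm.continuous_on
        continuous_on_subset[OF cX] continuous_on_subset[OF cY] subset_UNIV)
  ultimately show ?thesis by simp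
qed

lemma Sum_any_fm_phi_inv_mul:
  assumes fin: "\<And>c m. finite {n. fm (Lam (n + c) \<sigma>) (W (- m - n) \<sigma>) \<noteq> 0}"
  defines "S \<equiv> \<lambda>m. Sum_any (\<lambda>k. fm (Lam k \<sigma>) (W (- m - k) \<sigma>))"
  shows "Sum_any (\<lambda>n. fm (phi_inv_mul Lam n \<sigma>) (W (- m - n) \<sigma>))
      = (S (m - 4) - 2 * S m + S (m + 4)) / 16"
proof -
  let ?t = "\<lambda>c n. fm (Lam (n + c) \<sigma>) (W (- m - n) \<sigma>)"
  have shifted: "Sum_any (?t c) = S (m - c)" for c
  proof -
    have "\<And>n::int. - (m - c) - (n - - c) = - m - n" "\<And>n::int. n - - c = n + c" by arith+
    then have "Sum_any (?t c) = Sum_any (\<lambda>n. (\<lambda>k. fm (Lam k \<sigma>) (W (- (m - c) - k) \<sigma>)) (n - (- c)))"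
      by (simp only:)
    also have "\<dots> = S (m - c)" unfolding S_def by (rule Sum_any_shift)
    finally show ?thesis .
  qed
  have pointwise: "fm (phi_inv_mul Lam n \<sigma>) (W (- m - n) \<sigma>) =
      (?t 4 n - 2 * ?t 0 n + ?t (- 4) n) / 16" for n
    unfolding phi_inv_mul_def
    by (simp add: fm_scaleR_left fm.add_left fm.diff_left field_simps)
  have f2: "finite {n. 2 * ?t 0 n \<noteq> 0}" using fin[of 0 m] by simp
  have f3: "finite {n. ?t 4 n - 2 * ?t 0 n \<noteq> 0}"
    by (rule finite_subset[OF _ finite_UnI[OF fin[of 4 m] fin[of 0 m]]]) auto
  have f4: "finite {n. ?t 4 n - 2 * ?t 0 n + ?t (- 4) n \<noteq> 0}"
    by (rule finite_subset[OF _ finite_UnI[OF f3 fin[of "-4" m]]]) auto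
  have "Sum_any (\<lambda>n. fm (phi_inv_mul Lam n \<sigma>) (W (- m - n) \<sigma>))
      = Sum_any (\<lambda>n. ?t 4 n - 2 * ?t 0 n + ?t (- 4) n) / 16"
    by (simp only: pointwise Sum_any_divide[OF f4])
  also have "\<dots> = (S (m - 4) - 2 * S m + S (m + 4)) / 16"
    by (simp only: Sum_any.distrib[OF f3 fin] Sum_any_diff[OF fin f2]
        Sum_any_right_distrib[symmetric, OF fin] shifted) simp
  finally show ?thesis .
qed


lemma phi_pair_phi_inv_mul:
  assumes L0: "\<And>k. k \<le> 0 \<Longrightarrow> Lam k \<sigma> = 0" and W0: "\<And>j. j < - b \<Longrightarrow> W j \<sigma> = 0"
  shows "phi_pair fm (phi_inv_mul Lam) W \<sigma> = Sum_any (\<lambda>k. fm (Lam k \<sigma>) (W (- k) \<sigma>))"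
proof -
  define S where "S m = Sum_any (\<lambda>k. fm (Lam k \<sigma>) (W (- m - k) \<sigma>))" for m
  have S0: "S m = 0" if "m \<ge> b" for m
  proof -
    have "fm (Lam k \<sigma>) (W (- m - k) \<sigma>) = 0" for k
      using that L0[of k] W0[of "- m - k"] by (cases "k \<le> 0") auto
    then show ?thesis unfolding S_def by simp
  qed
  have fin: "finite {n. fm (Lam (n + c) \<sigma>) (W (- m - n) \<sigma>) \<noteq> 0}" for c m
  proof (rule finite_support_int_box[of _ "- c" "b - m"])
    fix n assume "fm (Lam (n + c) \<sigma>) (W (- m - n) \<sigma>) \<noteq> 0"
    then show "- c \<le> n \<and> n \<le> b - m"
      by (cases "n + c \<le> 0"; cases "- m - n < - b") (auto simp: L0 W0)
  qed
  have "phi_pair fm (phi_inv_mul Lam) W \<sigma> =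
      Sum_any (\<lambda>m. phi_c m * ((S (m - 4) - 2 * S m + S (m + 4)) / 16))"
    unfolding phi_pair_def S_def by (simp only: Sum_any_fm_phi_inv_mul[where Lam=Lam and W=W and \<sigma>=\<sigma>, OF fin])
  also have "\<dots> = S 0" by (rule Sum_any_phi_second_difference[OF S0])
  finally show ?thesis unfolding S_def by simp
qed

lemma phi_pair_neg_part:
  "phi_pair fm (neg_part u) (neg_part v) \<sigma> =
    Sum_any (\<lambda>m. phi_c m * Sum_any (\<lambda>n. if n < 0 \<and> 0 < m + n then fm (u n \<sigma>) (v (- m - n) \<sigma>) else 0))"
  unfolding phi_pair_def neg_part_def by (intro Sum_any.cong arg_cong2[where f="(*)"] refl) auto

lemma phi_pair_neg_part_eq_sum:
  assumes X0: "\<And>n \<sigma>. n < - a \<Longrightarrow> X n \<sigma> = 0" and Y0: "\<And>n \<sigma>. n < - b \<Longrightarrow> Y n \<sigma> = 0"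
  shows "phi_pair fm (neg_part X) (neg_part Y) \<sigma> = (\<Sum>m\<in>{4..a+b}. phi_c m * (\<Sum>n\<in>{-a..b}.
            if n < 0 \<and> 0 < m + n then fm (X n \<sigma>) (Y (- m - n) \<sigma>) else 0))"
  unfolding phi_pair_neg_part
  apply (rule Sum_any_phi_c_eq_sum)
  subgoal for m n by (cases "n < - a"; cases "- m - n < - b") (auto simp: X0 Y0 split: if_splits)
  done

text \<open>Since \<open>\<phi>\<close> has only positive powers, \<open>(\<pi>_+X, \<pi>_+W)_\<phi> = 0\<close>; hence
  \<open>(RX, W)_\<phi> + (X, RW)_\<phi> = 2(\<pi>_+X, \<pi>_+W)_\<phi> - 2(\<pi>_-X, \<pi>_-W)_\<phi>\<close> keeps only the second term.\<close>

lemma phi_pair_Rop_add: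
  assumes M0: "\<And>m. m < - N \<Longrightarrow> M m \<sigma> = 0" and W0: "\<And>j. j < - Nw \<Longrightarrow> W j \<sigma> = 0"
  shows "phi_pair fm (Rop M) W \<sigma> + phi_pair fm M (Rop W) \<sigma> =
    - 2 * phi_pair fm (neg_part M) (neg_part W) \<sigma>"
proof -
  let ?A = "\<lambda>m n. fm (Rop M n \<sigma>) (W (- m - n) \<sigma>)"
  let ?B = "\<lambda>m n. fm (M n \<sigma>) (Rop W (- m - n) \<sigma>)"
  let ?C = "\<lambda>m n. if n < 0 \<and> 0 < m + n then fm (M n \<sigma>) (W (- m - n) \<sigma>) else 0"
  have bA: "?A m n \<noteq> 0 \<Longrightarrow> - N \<le> n \<and> - Nw \<le> - m - n" for m n
    by (cases "n < - N"; cases "- m - n < - Nw") (auto simp: Rop_def M0 W0 cong: if_cong)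
  have bB: "?B m n \<noteq> 0 \<Longrightarrow> - N \<le> n \<and> - Nw \<le> - m - n" for m n
    by (cases "n < - N"; cases "- m - n < - Nw") (auto simp: Rop_def M0 W0 cong: if_cong)
  have bC: "?C m n \<noteq> 0 \<Longrightarrow> - N \<le> n \<and> - Nw \<le> - m - n" for m n
    by (cases "n < - N"; cases "- m - n < - Nw") (auto simp: M0 W0 cong: if_cong)
  have fA: "finite {n. ?A m n \<noteq> 0}" and fB: "finite {n. ?B m n \<noteq> 0}"
    and fC: "finite {n. ?C m n \<noteq> 0}" for m
    by (rule finite_support_int_box[of _ "- N" "Nw - m"], use bA bB bC in force)+
  have mode: "phi_c m * Sum_any (?A m) + phi_c m * Sum_any (?B m) = - 2 * (phi_c m * Sum_any (?C m))"
    for m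
  proof (cases "4 \<le> m")
    case True
    have "?A m n + ?B m n = - 2 * ?C m n" for n
      using True by (auto simp: Rop_def fm.minus_left fm.minus_right)
    then have "Sum_any (?A m) + Sum_any (?B m) = - 2 * Sum_any (?C m)"
      by (simp only: Sum_any.distrib[OF fA fB, symmetric] Sum_any_right_distrib[OF fC])
    then show ?thesis by (simp add: distrib_left[symmetric])
  qed (simp add: phi_c_def)
  have "phi_pair fm (Rop M) W \<sigma> + phi_pair fm M (Rop W) \<sigma>
      = Sum_any (\<lambda>m. phi_c m * Sum_any (?A m) + phi_c m * Sum_any (?B m))"
    unfolding phi_pair_def
    by (rule Sum_any.distrib[OF finite_support_phi_c finite_support_phi_c, symmetric]) (use bA bB in blast)+
  also have "\<dots> = - 2 * phi_pair fm (neg_part M) (neg_part W) \<sigma>"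
    unfolding phi_pair_neg_part mode
    by (rule Sum_any_right_distrib[OF finite_support_phi_c, symmetric]) (use bC in blast)
  finally show ?thesis .
qed

section \<open>The coadjoint action on \<open>S\<close>\<close>

text \<open>\<open>\<langle>\<Lambda>, [\<pi>_-M, \<pi>_-Y]\<rangle>\<close> in the residue pairing.\<close>

definition residue_bracket_pair ::
    "(int \<Rightarrow> real \<Rightarrow> 'g) \<Rightarrow> (int \<Rightarrow> real \<Rightarrow> 'g) \<Rightarrow> (int \<Rightarrow> real \<Rightarrow> 'g) \<Rightarrow> real \<Rightarrow> complex" where
  "residue_bracket_pair Lam M Y \<sigma> = Sum_any (\<lambda>k. Sum_any (\<lambda>m.
     if m < 0 \<and> 0 < k + m then fm (br (Lam k \<sigma>) (M m \<sigma>)) (Y (- k - m) \<sigma>) else 0))"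

lemma R_bracket_neg_mode:
  assumes M0: "\<And>m. m < - N \<Longrightarrow> M m \<sigma> = 0" and Y0: "\<And>j. j < - Ny \<Longrightarrow> Y j \<sigma> = 0"
    and "n < 0"
  shows "(1/2) *\<^sub>R (loop_br br (Rop M) Y n \<sigma> + loop_br br M (Rop Y) n \<sigma>)
       = - Sum_any (\<lambda>m. if m < 0 \<and> n - m < 0 then br (M m \<sigma>) (Y (n - m) \<sigma>) else 0)"
proof -
  let ?t = "\<lambda>m. br (Rop M m \<sigma>) (Y (n - m) \<sigma>) + br (M m \<sigma>) (Rop Y (n - m) \<sigma>)"
  have bound: "br (Rop M m \<sigma>) (Y (n - m) \<sigma>) \<noteq> 0 \<or> br (M m \<sigma>) (Rop Y (n - m) \<sigma>) \<noteq> 0 \<Longrightarrow>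
      - N \<le> m \<and> m \<le> n + Ny" for m
    by (cases "m < - N"; cases "n - m < - Ny") (auto simp: Rop_def M0 Y0 cong: if_cong)
  have f1: "finite {m. br (Rop M m \<sigma>) (Y (n - m) \<sigma>) \<noteq> 0}"
    and f2: "finite {m. br (M m \<sigma>) (Rop Y (n - m) \<sigma>) \<noteq> 0}"
    by (rule finite_support_int_box, use bound in blast)+
  have f3: "finite {m. ?t m \<noteq> 0}"
    by (rule finite_subset[OF _ finite_UnI[OF f1 f2]]) auto
  have mode: "(1/2) *\<^sub>R ?t m = - (if m < 0 \<and> n - m < 0 then br (M m \<sigma>) (Y (n - m) \<sigma>) else 0)"
    for m
    using \<open>n < 0\<close> by (auto simp: Rop_def br.minus_left br.minus_right scaleR_2[symmetric])
  have "(1/2) *\<^sub>R (loop_br br (Rop M) Y n \<sigma> + loop_br br M (Rop Y) n \<sigma>) = (1/2) *\<^sub>R Sum_any ?t"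
    unfolding loop_br_def by (simp add: Sum_any.distrib[OF f1 f2])
  also have "\<dots> = Sum_any (\<lambda>m. (1/2) *\<^sub>R ?t m)"
    by (rule Sum_any_linear[OF bounded_linear_scaleR_right f3])
  finally show ?thesis by (simp only: mode Sum_any_uminus)
qed

lemma residue_pair_R_bracket:
  assumes L0: "\<And>k. k \<le> 0 \<Longrightarrow> Lam k \<sigma> = 0" and M0: "\<And>m. m < - N \<Longrightarrow> M m \<sigma> = 0"
    and Z: "\<And>n. n < 0 \<Longrightarrow>
      Z n \<sigma> = - Sum_any (\<lambda>m. if m < 0 \<and> n - m < 0 then br (M m \<sigma>) (Y (n - m) \<sigma>) else 0)"
  shows "Sum_any (\<lambda>k. fm (Lam k \<sigma>) (Z (- k) \<sigma>)) = - residue_bracket_pair Lam M Y \<sigma>"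
proof -
  have mode: "fm (Lam k \<sigma>) (Z (- k) \<sigma>) = - Sum_any (\<lambda>m.
      if m < 0 \<and> 0 < k + m then fm (br (Lam k \<sigma>) (M m \<sigma>)) (Y (- k - m) \<sigma>) else 0)" for k
  proof (cases "k \<le> 0")
    case True
    then show ?thesis by (simp add: L0 cong: if_cong)
  next
    case False
    let ?g = "\<lambda>m. if m < 0 \<and> - k - m < 0 then br (M m \<sigma>) (Y (- k - m) \<sigma>) else 0"
    have fin: "finite {m. ?g m \<noteq> 0}"
      apply (rule finite_support_int_box[of _ "- N" "-1"])
      subgoal for m by (cases "m < - N") (auto simp: M0 split: if_splits)
      done
    have "fm (Lam k \<sigma>) (Z (- k) \<sigma>) = - fm (Lam k \<sigma>) (Sum_any ?g)"
      using False by (simp add: Z fm.minus_right)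
    also have "fm (Lam k \<sigma>) (Sum_any ?g) = Sum_any (\<lambda>m. fm (Lam k \<sigma>) (?g m))"
      by (rule Sum_any_linear[OF fm.bounded_linear_right fin])
    also have "\<dots> = Sum_any (\<lambda>m.
        if m < 0 \<and> 0 < k + m then fm (br (Lam k \<sigma>) (M m \<sigma>)) (Y (- k - m) \<sigma>) else 0)"
      by (rule Sum_any.cong) (auto simp: fm_invariant)
    finally show ?thesis .
  qed
  show ?thesis unfolding residue_bracket_pair_def by (simp only: mode Sum_any_uminus)
qed

lemma residue_bracket_pair_eq:
  assumes M0: "\<And>m. m < - N \<Longrightarrow> M m \<sigma> = 0" and Y0: "\<And>j. j < - Ny \<Longrightarrow> Y j \<sigma> = 0"
  shows "residue_bracket_pair Lam M Y \<sigma> = Sum_any (\<lambda>p. if 1 \<le> p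
     then \<Sum>m\<in>{-N..-1}. fm (br (Lam (p - m) \<sigma>) (M m \<sigma>)) (Y (- p) \<sigma>) else 0)"
proof -
  define g where "g k m = (if m < 0 \<and> 0 < k + m
    then fm (br (Lam k \<sigma>) (M m \<sigma>)) (Y (- k - m) \<sigma>) else 0)" for k m
  have fin: "finite {(k, m). g k m \<noteq> 0}"
    apply (rule finite_support_int_box2[of _ 1 "Ny + N" "- N" "-1"])
    subgoal for k m by (cases "m < - N"; cases "- k - m < - Ny") (auto simp: g_def M0 Y0 split: if_splits)
    done
  have "residue_bracket_pair Lam M Y \<sigma> = Sum_any (\<lambda>p. Sum_any (\<lambda>m. g (p - m) m))"
    unfolding residue_bracket_pair_def g_def[symmetric] by (rule Sum_any_shear[OF fin])
  also have "\<dots> = Sum_any (\<lambda>p. if 1 \<le> p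
      then \<Sum>m\<in>{-N..-1}. fm (br (Lam (p - m) \<sigma>) (M m \<sigma>)) (Y (- p) \<sigma>) else 0)"
  proof (rule Sum_any.cong)
    fix p
    show "Sum_any (\<lambda>m. g (p - m) m) = (if 1 \<le> p
        then \<Sum>m\<in>{-N..-1}. fm (br (Lam (p - m) \<sigma>) (M m \<sigma>)) (Y (- p) \<sigma>) else 0)"
    proof (cases "1 \<le> p")
      case True
      have "Sum_any (\<lambda>m. g (p - m) m) = (\<Sum>m\<in>{-N..-1}. g (p - m) m)"
        apply (rule Sum_any_eq_sum, simp)
        subgoal for m by (cases "m < - N") (auto simp: g_def M0 split: if_splits)
        done
      with True show ?thesis by (auto simp: g_def intro!: sum.cong)
    qed (simp add: g_def)
  qed
  finally show ?thesis .
qed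

lemma phi_pair_neg_part_eq:
  assumes X0: "\<And>m. m < - N \<Longrightarrow> X m \<sigma> = 0" and Y0: "\<And>j. j < - Ny \<Longrightarrow> Y j \<sigma> = 0"
  shows "phi_pair fm (neg_part X) (neg_part Y) \<sigma> = Sum_any (\<lambda>p. if 1 \<le> p
     then \<Sum>n\<in>{-N..-1}. complex_of_real (phi_r (p - n)) * fm (X n \<sigma>) (Y (- p) \<sigma>) else 0)"
proof -
  define h where "h m n = (if n < 0 \<and> 0 < m + n then fm (X n \<sigma>) (Y (- m - n) \<sigma>) else 0)" for m n
  have fin: "finite {(m, n). phi_c m * h m n \<noteq> 0}"
    apply (rule finite_support_int_box2[of _ 4 "Ny + N" "- N" "-1"])
    subgoal for m n
      by (cases "n < - N"; cases "- m - n < - Ny") (auto simp: h_def phi_c_def X0 Y0 split: if_splits)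
    done
  have fin1: "finite {n. h m n \<noteq> 0}" for m
    apply (rule finite_support_int_box[of _ "- N" "-1"])
    subgoal for n by (cases "n < - N") (auto simp: h_def X0 split: if_splits)
    done
  have "phi_pair fm (neg_part X) (neg_part Y) \<sigma> = Sum_any (\<lambda>m. Sum_any (\<lambda>n. phi_c m * h m n))"
    unfolding phi_pair_neg_part h_def[symmetric] by (simp only: Sum_any_right_distrib[OF fin1])
  also have "\<dots> = Sum_any (\<lambda>p. Sum_any (\<lambda>n. phi_c (p - n) * h (p - n) n))"
    by (rule Sum_any_shear[OF fin])
  also have "\<dots> = Sum_any (\<lambda>p. if 1 \<le> p
      then \<Sum>n\<in>{-N..-1}. complex_of_real (phi_r (p - n)) * fm (X n \<sigma>) (Y (- p) \<sigma>) else 0)"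
  proof (rule Sum_any.cong)
    fix p
    show "Sum_any (\<lambda>n. phi_c (p - n) * h (p - n) n) = (if 1 \<le> p
        then \<Sum>n\<in>{-N..-1}. complex_of_real (phi_r (p - n)) * fm (X n \<sigma>) (Y (- p) \<sigma>) else 0)"
    proof (cases "1 \<le> p")
      case True
      have "Sum_any (\<lambda>n. phi_c (p - n) * h (p - n) n) = (\<Sum>n\<in>{-N..-1}. phi_c (p - n) * h (p - n) n)"
        apply (rule Sum_any_eq_sum, simp)
        subgoal for n by (cases "n < - N") (auto simp: h_def X0 split: if_splits)
        done
      with True show ?thesis by (auto simp: h_def phi_c_eq_phi_r intro!: sum.cong)
    qed (simp add: h_def)
  qed
  finally show ?thesis .
qed

lemma residue_pair_witness:
  assumes M0: "\<And>m. m < - N \<Longrightarrow> M m \<sigma> = 0" and dM0: "\<And>m. m < - N \<Longrightarrow> dM m \<sigma> = 0"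
    and Y0: "\<And>j. j < - Ny \<Longrightarrow> Y j \<sigma> = 0"
    and Lam'0: "\<And>p. p \<le> 0 \<Longrightarrow> Lam' p \<sigma> = 0"
    and Lam': "\<And>p. 1 \<le> p \<Longrightarrow> Lam' p \<sigma> = (\<Sum>m\<in>{-N..-1}. br (Lam (p - m) \<sigma>) (M m \<sigma>))
                 - (\<Sum>n\<in>{-N..-1}. phi_r (p - n) *\<^sub>R dM n \<sigma>)"
  shows "Sum_any (\<lambda>p. fm (Lam' p \<sigma>) (Y (- p) \<sigma>)) =
    residue_bracket_pair Lam M Y \<sigma> - phi_pair fm (neg_part dM) (neg_part Y) \<sigma>"
proof -
  define a where "a p = (if 1 \<le> p
    then \<Sum>m\<in>{-N..-1}. fm (br (Lam (p - m) \<sigma>) (M m \<sigma>)) (Y (- p) \<sigma>) else 0)" for p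
  define c where "c p = (if 1 \<le> p
    then \<Sum>n\<in>{-N..-1}. complex_of_real (phi_r (p - n)) * fm (dM n \<sigma>) (Y (- p) \<sigma>) else 0)" for p
  have "fm (Lam' p \<sigma>) (Y (- p) \<sigma>) = a p - c p" for p
    by (cases "1 \<le> p")
      (simp_all add: Lam' Lam'0 a_def c_def fm.diff_left fm.sum_left fm_scaleR_left)
  moreover have "finite {p. a p \<noteq> 0}"
    apply (rule finite_support_int_box[of _ 1 Ny])
    subgoal for p by (cases "Ny < p") (auto simp: a_def Y0 split: if_splits)
    done
  moreover have "finite {p. c p \<noteq> 0}"
    apply (rule finite_support_int_box[of _ 1 Ny])
    subgoal for p by (cases "Ny < p") (auto simp: c_def Y0 split: if_splits)
    done
  ultimately have "Sum_any (\<lambda>p. fm (Lam' p \<sigma>) (Y (- p) \<sigma>)) = Sum_any a - Sum_any c"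
    by (simp only: Sum_any_diff)
  also have "Sum_any a = residue_bracket_pair Lam M Y \<sigma>"
    unfolding a_def by (rule residue_bracket_pair_eq[where Ny=Ny, symmetric]) (simp_all add: M0 Y0)
  also have "Sum_any c = phi_pair fm (neg_part dM) (neg_part Y) \<sigma>"
    unfolding c_def by (rule phi_pair_neg_part_eq[where Ny=Ny, symmetric]) (simp_all add: dM0 Y0)
  finally show ?thesis .
qed

text \<open>Projecting \<open>\<Lambda>'_p = \<Sum>_{m<0} [\<Lambda>_{p-m}, M_m] - \<phi>_{p-m} \<partial>_\<sigma>M_m\<close> to degree \<open>p\<close>: the factor
  \<open>p - m\<close> of \<open>\<Lambda>_{p-m}\<close> splits as \<open>p\<close> plus a term absorbed into \<open>B'\<close>, and \<open>\<phi>_{p-m} = 4(p - m)\<close>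
  on the modes \<open>p \<equiv> m (mod 4)\<close> that survive the projection.\<close>

lemma witness_lax_series:
  fixes N :: int and A B :: "real \<Rightarrow> 'g"
  assumes gM: "\<And>m. gcomp pr m (M m \<sigma>) = M m \<sigma>" and gdM: "\<And>m. gcomp pr m (dM m \<sigma>) = dM m \<sigma>"
    and p: "1 \<le> p"
  defines "A' \<equiv> \<lambda>\<sigma>. \<Sum>m\<in>{-N..-1}. br (A \<sigma>) (M m \<sigma>) - 4 *\<^sub>R dM m \<sigma>"
    and "B' \<equiv> \<lambda>\<sigma>. \<Sum>m\<in>{-N..-1}. br (B \<sigma> - of_int m *\<^sub>R A \<sigma>) (M m \<sigma>) + (4 * of_int m) *\<^sub>R dM m \<sigma>"
  shows "lax_series pr A' B' p \<sigma> = (\<Sum>m\<in>{-N..-1}. br (lax_series pr A B (p - m) \<sigma>) (M m \<sigma>))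
                 - (\<Sum>n\<in>{-N..-1}. phi_r (p - n) *\<^sub>R dM n \<sigma>)"
proof -
  interpret gc: bounded_linear "gcomp pr k" for k by (rule bounded_linear_gcomp)
  have gbr: "gcomp pr p (br x (M m \<sigma>)) = br (gcomp pr (p - m) x) (M m \<sigma>)" for x m
    using gcomp_br[of p x m "M m \<sigma>"] gM[of m] by simp
  have gd: "gcomp pr p (dM m \<sigma>) = (if 4 dvd (p - m) then dM m \<sigma> else 0)" for m
    using gcomp_gcomp[of p m "dM m \<sigma>"] gdM[of m] by simp
  have mode: "of_int p *\<^sub>R gcomp pr p (br (A \<sigma>) (M m \<sigma>) - 4 *\<^sub>R dM m \<sigma>)
      + gcomp pr p (br (B \<sigma> - of_int m *\<^sub>R A \<sigma>) (M m \<sigma>) + (4 * of_int m) *\<^sub>R dM m \<sigma>)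
      = br (lax_series pr A B (p - m) \<sigma>) (M m \<sigma>) - phi_r (p - m) *\<^sub>R dM m \<sigma>"
    if m: "m \<in> {-N..-1}" for m
  proof -
    have pm: "1 \<le> p - m" "2 \<le> p - m" using m p by auto
    then have lax: "lax_series pr A B (p - m) \<sigma> =
        of_int (p - m) *\<^sub>R gcomp pr (p - m) (A \<sigma>) + gcomp pr (p - m) (B \<sigma>)"
      by (simp add: lax_series_def)
    show ?thesis
      unfolding lax phi_r_eq[OF pm(2)]
      by (simp add: gc.diff gc.add gc.scaleR gbr gd br.diff_left br.add_left br.scaleR_left
          gc.diff[symmetric] algebra_simps)
  qed
  have "lax_series pr A' B' p \<sigma> = of_int p *\<^sub>R gcomp pr p (A' \<sigma>) + gcomp pr p (B' \<sigma>)"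
    using p by (simp add: lax_series_def)
  also have "\<dots> = (\<Sum>m\<in>{-N..-1}. of_int p *\<^sub>R gcomp pr p (br (A \<sigma>) (M m \<sigma>) - 4 *\<^sub>R dM m \<sigma>)
      + gcomp pr p (br (B \<sigma> - of_int m *\<^sub>R A \<sigma>) (M m \<sigma>) + (4 * of_int m) *\<^sub>R dM m \<sigma>))"
    unfolding A'_def B'_def by (simp only: gc.sum scaleR_sum_right sum.distrib[symmetric])
  also have "\<dots> = (\<Sum>m\<in>{-N..-1}. br (lax_series pr A B (p - m) \<sigma>) (M m \<sigma>) - phi_r (p - m) *\<^sub>R dM m \<sigma>)"
    by (rule sum.cong[OF refl mode])
  finally show ?thesis by (simp add: sum_subtractf)
qed

lemma has_vector_derivative_phi_pair_neg_part:
  assumes sX: "\<And>n. smooth (X n)" and sY: "\<And>n. smooth (Y n)"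
    and X0: "\<And>n \<sigma>. n < - a \<Longrightarrow> X n \<sigma> = 0" and Y0: "\<And>n \<sigma>. n < - b \<Longrightarrow> Y n \<sigma> = 0"
  shows "(phi_pair fm (neg_part X) (neg_part Y) has_vector_derivative
      phi_pair fm (neg_part X) (neg_part (dsig Y)) t +
      phi_pair fm (neg_part (dsig X)) (neg_part Y) t) (at t)"
proof -
  have dX0: "\<And>n \<sigma>. n < - a \<Longrightarrow> dsig X n \<sigma> = 0" and dY0: "\<And>n \<sigma>. n < - b \<Longrightarrow> dsig Y n \<sigma> = 0"
    by (simp_all add: dsig_eq_vderiv vderiv_zero X0 Y0)
  let ?T = "\<lambda>m n \<sigma>. if n < 0 \<and> 0 < m + n then fm (X n \<sigma>) (Y (- m - n) \<sigma>) else 0"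
  let ?D1 = "\<lambda>m n. if n < 0 \<and> 0 < m + n then fm (X n t) (dsig Y (- m - n) t) else 0"
  let ?D2 = "\<lambda>m n. if n < 0 \<and> 0 < m + n then fm (dsig X n t) (Y (- m - n) t) else 0"
  have "phi_pair fm (neg_part X) (neg_part Y) =
      (\<lambda>\<sigma>. \<Sum>m\<in>{4..a+b}. phi_c m * (\<Sum>n\<in>{-a..b}. ?T m n \<sigma>))"
    using phi_pair_neg_part_eq_sum[OF X0 Y0] by (simp add: fun_eq_iff)
  moreover have "((\<lambda>\<sigma>. ?T m n \<sigma>) has_vector_derivative ?D1 m n + ?D2 m n) (at t)" for m n
  proof (cases "n < 0 \<and> 0 < m + n")
    case True
    then show ?thesis
      using fm.has_vector_derivative[OF smooth_has_vderiv[OF sX] smooth_has_vderiv[OF sY], of n "- m - n" t]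
      by (simp add: dsig_eq_vderiv)
  next
    case False
    then show ?thesis by (simp only: if_not_P[OF False]) simp
  qed
  ultimately have "(phi_pair fm (neg_part X) (neg_part Y) has_vector_derivative
      (\<Sum>m\<in>{4..a+b}. phi_c m * (\<Sum>n\<in>{-a..b}. ?D1 m n + ?D2 m n))) (at t)"
    by (simp only:) (intro has_vector_derivative_sum has_vector_derivative_mult_right)
  moreover have "phi_pair fm (neg_part X) (neg_part (dsig Y)) t =
      (\<Sum>m\<in>{4..a+b}. phi_c m * (\<Sum>n\<in>{-a..b}. ?D1 m n))"
    by (rule phi_pair_neg_part_eq_sum[OF X0 dY0])
  moreover have "phi_pair fm (neg_part (dsig X)) (neg_part Y) t =
      (\<Sum>m\<in>{4..a+b}. phi_c m * (\<Sum>n\<in>{-a..b}. ?D2 m n))"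
    by (rule phi_pair_neg_part_eq_sum[OF dX0 Y0])
  ultimately show ?thesis by (simp only: sum.distrib distrib_left)
qed
text \<open>The integrand is the derivative of a \<open>2\<pi>\<close>-periodic function.\<close>

lemma has_integral_phi_pair_neg_part_derivative:
  assumes sX: "\<And>n. smooth_S1 (X n)" and sY: "\<And>n. smooth_S1 (Y n)"
    and X0: "\<And>n \<sigma>. n < - a \<Longrightarrow> X n \<sigma> = 0" and Y0: "\<And>n \<sigma>. n < - b \<Longrightarrow> Y n \<sigma> = 0"
  shows "((\<lambda>\<sigma>. phi_pair fm (neg_part X) (neg_part (dsig Y)) \<sigma> +
      phi_pair fm (neg_part (dsig X)) (neg_part Y) \<sigma>) has_integral 0) {0..2*pi}"
proof -
  have "((\<lambda>\<sigma>. phi_pair fm (neg_part X) (neg_part (dsig Y)) \<sigma> +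
      phi_pair fm (neg_part (dsig X)) (neg_part Y) \<sigma>) has_integral
      phi_pair fm (neg_part X) (neg_part Y) (2*pi) - phi_pair fm (neg_part X) (neg_part Y) 0) {0..2*pi}"
    using has_vector_derivative_phi_pair_neg_part[OF smooth_S1_smooth[OF sX] smooth_S1_smooth[OF sY] X0 Y0]
    by (intro fundamental_theorem_of_calculus) (auto intro: has_vector_derivative_at_within)
  moreover have "X n (2 * pi) = X n 0" "Y n (2 * pi) = Y n 0" for n
    using smooth_S1_periodic[OF sX, of n 0] smooth_S1_periodic[OF sY, of n 0] by simp_all
  then have "phi_pair fm (neg_part X) (neg_part Y) (2*pi) = phi_pair fm (neg_part X) (neg_part Y) 0"
    unfolding phi_pair_def neg_part_def by (simp cong: if_cong)
  ultimately show ?thesis by simp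
qed

lemma coadjoint_pairing_pointwise:
  assumes M0: "\<And>n \<sigma>. n < - N \<Longrightarrow> M n \<sigma> = 0" and Y0: "\<And>n \<sigma>. n < - Ny \<Longrightarrow> Y n \<sigma> = 0"
    and sY: "\<And>n. smooth (Y n)"
    and Lam0: "\<And>k \<sigma>. k \<le> 0 \<Longrightarrow> Lam k \<sigma> = 0" and Lam'0: "\<And>p \<sigma>. p \<le> 0 \<Longrightarrow> Lam' p \<sigma> = 0"
    and Lam': "\<And>p \<sigma>. 1 \<le> p \<Longrightarrow> Lam' p \<sigma> = (\<Sum>m\<in>{-N..-1}. br (Lam (p - m) \<sigma>) (M m \<sigma>))
                 - (\<Sum>n\<in>{-N..-1}. phi_r (p - n) *\<^sub>R dsig M n \<sigma>)"
  shows "phi_pair fm (phi_inv_mul Lam') Y \<sigma> =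
      - phi_pair fm (phi_inv_mul Lam) (fst (hat_brR br fm (M, c) (Y, b))) \<sigma>
      - (phi_pair fm (Rop M) (dsig Y) \<sigma> + phi_pair fm M (dsig (Rop Y)) \<sigma>) / 2
      - (phi_pair fm (neg_part M) (neg_part (dsig Y)) \<sigma> +
         phi_pair fm (neg_part (dsig M)) (neg_part Y) \<sigma>)"
proof -
  define Z where "Z = fst (hat_brR br fm (M, c) (Y, b))"
  have Z: "Z n \<sigma> = (1/2) *\<^sub>R (loop_br br (Rop M) Y n \<sigma> + loop_br br M (Rop Y) n \<sigma>)" for n \<sigma>
    by (simp add: Z_def hat_brR_eq)
  have dM0: "\<And>n \<sigma>. n < - N \<Longrightarrow> dsig M n \<sigma> = 0" and dY0: "\<And>n \<sigma>. n < - Ny \<Longrightarrow> dsig Y n \<sigma> = 0"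
    by (simp_all add: dsig_eq_vderiv vderiv_zero M0 Y0)
  have RM0: "\<And>n \<sigma>. n < - N \<Longrightarrow> Rop M n \<sigma> = 0" and RY0: "\<And>n \<sigma>. n < - Ny \<Longrightarrow> Rop Y n \<sigma> = 0"
    by (simp_all add: Rop_def M0 Y0)
  have Z0: "Z n \<sigma> = 0" if "n < - (N + Ny)" for n \<sigma>
    unfolding Z using that
    by (simp add: loop_br_below[OF bounded_bilinear_br RM0 Y0] loop_br_below[OF bounded_bilinear_br M0 RY0])
  have "phi_pair fm (phi_inv_mul Lam') Y \<sigma> = Sum_any (\<lambda>p. fm (Lam' p \<sigma>) (Y (- p) \<sigma>))"
    by (rule phi_pair_phi_inv_mul[where b=Ny]) (simp_all add: Lam'0 Y0)
  also have "\<dots> = residue_bracket_pair Lam M Y \<sigma> - phi_pair fm (neg_part (dsig M)) (neg_part Y) \<sigma>"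
    by (rule residue_pair_witness[where N=N and Ny=Ny]) (simp_all add: M0 dM0 Y0 Lam'0 Lam')
  finally have witness: "phi_pair fm (phi_inv_mul Lam') Y \<sigma> =
      residue_bracket_pair Lam M Y \<sigma> - phi_pair fm (neg_part (dsig M)) (neg_part Y) \<sigma>" .
  have "phi_pair fm (phi_inv_mul Lam) Z \<sigma> = Sum_any (\<lambda>k. fm (Lam k \<sigma>) (Z (- k) \<sigma>))"
    by (rule phi_pair_phi_inv_mul[where b="N + Ny"]) (simp_all add: Lam0 Z0)
  also have "\<dots> = - residue_bracket_pair Lam M Y \<sigma>"
    by (rule residue_pair_R_bracket[where N=N]) (simp_all add: Lam0 M0 Z R_bracket_neg_mode[OF M0 Y0])
  finally have bracket: "phi_pair fm (phi_inv_mul Lam) Z \<sigma> = - residue_bracket_pair Lam M Y \<sigma>" .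
  have cocycle: "phi_pair fm (Rop M) (dsig Y) \<sigma> + phi_pair fm M (dsig (Rop Y)) \<sigma> =
      - 2 * phi_pair fm (neg_part M) (neg_part (dsig Y)) \<sigma>"
    unfolding dsig_Rop[OF sY] by (rule phi_pair_Rop_add[OF M0 dY0])
  show ?thesis unfolding Z_def[symmetric] witness bracket cocycle by simp
qed

lemma R_bracket_below:
  assumes M0: "\<And>n \<sigma>. n < - N \<Longrightarrow> M n \<sigma> = 0" and Y0: "\<And>n \<sigma>. n < - Ny \<Longrightarrow> Y n \<sigma> = 0"
    and "n < - (N + Ny)"
  shows "fst (hat_brR br fm (M, c) (Y, b)) n \<sigma> = 0"
proof -
  have RM0: "\<And>n \<sigma>. n < - N \<Longrightarrow> Rop M n \<sigma> = 0" and RY0: "\<And>n \<sigma>. n < - Ny \<Longrightarrow> Rop Y n \<sigma> = 0"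
    by (simp_all add: Rop_def M0 Y0)
  with assms show ?thesis
    by (simp add: hat_brR_eq loop_br_below[OF bounded_bilinear_br RM0 Y0]
        loop_br_below[OF bounded_bilinear_br M0 RY0])
qed

lemma smooth_S1_R_bracket:
  assumes M0: "\<And>n \<sigma>. n < - N \<Longrightarrow> M n \<sigma> = 0" and Y0: "\<And>n \<sigma>. n < - Ny \<Longrightarrow> Y n \<sigma> = 0"
    and sM: "\<And>n. smooth_S1 (M n)" and sY: "\<And>n. smooth_S1 (Y n)"
  shows "smooth_S1 (fst (hat_brR br fm (M, c) (Y, b)) n)"
proof -
  have RM0: "\<And>n \<sigma>. n < - N \<Longrightarrow> Rop M n \<sigma> = 0" and RY0: "\<And>n \<sigma>. n < - Ny \<Longrightarrow> Rop Y n \<sigma> = 0"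
    by (simp_all add: Rop_def M0 Y0)
  show ?thesis unfolding hat_brR_eq fst_conv
    by (intro smooth_S1_scaleR smooth_S1_add smooth_S1_Rop sM sY
        smooth_S1_loop_br[OF bounded_bilinear_br RM0 Y0] smooth_S1_loop_br[OF bounded_bilinear_br M0 RY0])
qed

lemma integrable_phi_pair:
  assumes "\<And>n. smooth_S1 (X n)" "\<And>n. smooth_S1 (Y n)"
    and "\<And>n \<sigma>. n < - a \<Longrightarrow> X n \<sigma> = 0" "\<And>n \<sigma>. n < - b \<Longrightarrow> Y n \<sigma> = 0"
  shows "phi_pair fm X Y integrable_on {0..2*pi}"
  by (intro integrable_continuous_interval continuous_on_phi_pair
      smooth_continuous_on[OF smooth_S1_smooth] assms)

lemma hat_pair_coadjoint_R_action:
  assumes M0: "\<And>n \<sigma>. n < - N \<Longrightarrow> M n \<sigma> = 0" and Y0: "\<And>n \<sigma>. n < - Ny \<Longrightarrow> Y n \<sigma> = 0"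
    and sM: "\<And>n. smooth_S1 (M n)" and sY: "\<And>n. smooth_S1 (Y n)"
    and sLam: "\<And>k. smooth_S1 (Lam k)"
    and Lam0: "\<And>k \<sigma>. k \<le> 0 \<Longrightarrow> Lam k \<sigma> = 0" and Lam'0: "\<And>p \<sigma>. p \<le> 0 \<Longrightarrow> Lam' p \<sigma> = 0"
    and Lam': "\<And>p \<sigma>. 1 \<le> p \<Longrightarrow> Lam' p \<sigma> = (\<Sum>m\<in>{-N..-1}. br (Lam (p - m) \<sigma>) (M m \<sigma>))
                 - (\<Sum>n\<in>{-N..-1}. phi_r (p - n) *\<^sub>R dsig M n \<sigma>)"
  shows "hat_pair fm (phi_inv_mul Lam', 0) (Y, b) =
    - hat_pair fm (phi_inv_mul Lam, 1) (hat_brR br fm (M, c) (Y, b))"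
proof -
  define Z where "Z = fst (hat_brR br fm (M, c) (Y, b))"
  have RM0: "\<And>n \<sigma>. n < - N \<Longrightarrow> Rop M n \<sigma> = 0" and RY0: "\<And>n \<sigma>. n < - Ny \<Longrightarrow> Rop Y n \<sigma> = 0"
    by (simp_all add: Rop_def M0 Y0)
  have dY0: "\<And>n \<sigma>. n < - Ny \<Longrightarrow> dsig Y n \<sigma> = 0"
    and dRY0: "\<And>n \<sigma>. n < - Ny \<Longrightarrow> dsig (Rop Y) n \<sigma> = 0"
    by (simp_all add: dsig_eq_vderiv vderiv_zero Y0 RY0)
  have L0: "\<And>n \<sigma>. n < - 3 \<Longrightarrow> phi_inv_mul Lam n \<sigma> = 0"
    by (simp add: phi_inv_mul_def Lam0)
  have sZ: "\<And>n. smooth_S1 (Z n)"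
    unfolding Z_def by (rule smooth_S1_R_bracket[OF M0 Y0 sM sY])
  have Z0: "\<And>n \<sigma>. n < - (N + Ny) \<Longrightarrow> Z n \<sigma> = 0"
    unfolding Z_def by (rule R_bracket_below[OF M0 Y0])
  have int_L: "phi_pair fm (phi_inv_mul Lam) Z integrable_on {0..2*pi}"
    by (rule integrable_phi_pair[where a=3 and b="N + Ny", OF smooth_S1_phi_inv_mul[OF sLam] sZ L0 Z0])
  have int_RM: "phi_pair fm (Rop M) (dsig Y) integrable_on {0..2*pi}"
    by (rule integrable_phi_pair[where a=N and b=Ny, OF smooth_S1_Rop[OF sM]
          smooth_S1_vderiv[OF sY, folded dsig_eq_vderiv] RM0 dY0])
  have int_RY: "phi_pair fm M (dsig (Rop Y)) integrable_on {0..2*pi}"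
    by (rule integrable_phi_pair[where a=N and b=Ny, OF sM
          smooth_S1_vderiv[OF smooth_S1_Rop[OF sY], folded dsig_eq_vderiv] M0 dRY0])
  have "phi_pair fm (phi_inv_mul Lam') Y = (\<lambda>\<sigma>. - phi_pair fm (phi_inv_mul Lam) Z \<sigma>
      - (phi_pair fm (Rop M) (dsig Y) \<sigma> + phi_pair fm M (dsig (Rop Y)) \<sigma>) / 2
      - (phi_pair fm (neg_part M) (neg_part (dsig Y)) \<sigma> +
         phi_pair fm (neg_part (dsig M)) (neg_part Y) \<sigma>))"
    unfolding Z_def
    by (intro ext coadjoint_pairing_pointwise[OF M0 Y0 smooth_S1_smooth[OF sY] Lam0 Lam'0 Lam'])
  then have "(phi_pair fm (phi_inv_mul Lam') Y has_integral
      - integral {0..2*pi} (phi_pair fm (phi_inv_mul Lam) Z)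
      - (integral {0..2*pi} (phi_pair fm (Rop M) (dsig Y)) +
         integral {0..2*pi} (phi_pair fm M (dsig (Rop Y)))) / 2 - 0) {0..2*pi}"
    by (simp only:) (intro has_integral_diff has_integral_neg has_integral_divide has_integral_add
        integrable_integral int_L int_RM int_RY has_integral_phi_pair_neg_part_derivative[OF sM sY M0 Y0])
  then show ?thesis
    by (simp add: integral_unique hat_pair_def G_pair_def hat_brR_eq omega_def Z_def)
qed

lemma coadjoint_R_action_S_form:
  assumes M: "in_G pr M" and sA: "smooth_S1 A" and sB: "smooth_S1 B"
  shows "\<exists>L'. S_form pr L' \<and> (\<forall>Y b. in_G pr Y \<longrightarrow> hat_pair fm (L', 0) (Y, b) =
      - hat_pair fm (phi_inv_mul (lax_series pr A B), 1) (hat_brR br fm (M, c) (Y, b)))"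
proof -
  obtain N where M0: "\<And>n \<sigma>. n < - N \<Longrightarrow> M n \<sigma> = 0" using in_G_bound[OF M] by blast
  have sM: "\<And>n. smooth_S1 (M n)" and gM: "\<And>n \<sigma>. gcomp pr n (M n \<sigma>) = M n \<sigma>"
    using in_G_smooth[OF M] in_G_graded[OF M] by auto
  have sdM: "\<And>n. smooth_S1 (dsig M n)" by (simp add: dsig_eq_vderiv smooth_S1_vderiv sM)
  have gdM: "\<And>n \<sigma>. gcomp pr n (dsig M n \<sigma>) = dsig M n \<sigma>"
    unfolding dsig_eq_vderiv by (rule gcomp_vderiv[OF smooth_S1_smooth[OF sM] gM])
  define A' where "A' \<equiv> \<lambda>\<sigma>. \<Sum>m\<in>{-N..-1}. br (A \<sigma>) (M m \<sigma>) - 4 *\<^sub>R dsig M m \<sigma>"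
  define B' where "B' \<equiv> \<lambda>\<sigma>. \<Sum>m\<in>{-N..-1}.
    br (B \<sigma> - of_int m *\<^sub>R A \<sigma>) (M m \<sigma>) + (4 * of_int m) *\<^sub>R dsig M m \<sigma>"
  have "smooth_S1 A'" "smooth_S1 B'" unfolding A'_def B'_def
    by (intro smooth_S1_sum finite_atLeastAtMost_int smooth_S1_add smooth_S1_diff
        smooth_S1_bilinear[OF bounded_bilinear_br] smooth_S1_scaleR sA sB sM sdM)+
  then have "S_form pr (phi_inv_mul (lax_series pr A' B'))" unfolding S_form_def by blast
  moreover have "hat_pair fm (phi_inv_mul (lax_series pr A' B'), 0) (Y, b) =
      - hat_pair fm (phi_inv_mul (lax_series pr A B), 1) (hat_brR br fm (M, c) (Y, b))"
    if Y: "in_G pr Y" for Y b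
  proof -
    obtain Ny where Y0: "\<And>n \<sigma>. n < - Ny \<Longrightarrow> Y n \<sigma> = 0" using in_G_bound[OF Y] by blast
    show ?thesis
      using witness_lax_series[OF gM gdM, where A=A and B=B and N=N]
      by (intro hat_pair_coadjoint_R_action[OF M0 Y0 sM in_G_smooth[OF Y]])
        (simp_all add: smooth_S1_lax_series sA sB lax_series_nonpos A'_def B'_def)
  qed
  ultimately show ?thesis by blast
qed

lemma lax_matrix_in_S_set:
  assumes "smooth_S1 A1" "smooth_S1 P1"
  shows "(lax_matrix br pr A1 P1, 1) \<in> S_set pr"
proof -
  define A where "A = (\<lambda>\<sigma>. 4 *\<^sub>R A1 \<sigma>)"
  define B where "B = (\<lambda>\<sigma>. 8 *\<^sub>R nabla1 br A1 P1 \<sigma>)"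
  have "nabla1 br A1 P1 = (\<lambda>\<sigma>. vderiv P1 \<sigma> - br (A1 \<sigma>) (P1 \<sigma>))"
    by (simp add: nabla1_def vderiv_def fun_eq_iff)
  then have "smooth_S1 A" "smooth_S1 B" unfolding A_def B_def
    by (auto intro!: smooth_S1_scaleR smooth_S1_diff smooth_S1_vderiv
        smooth_S1_bilinear[OF bounded_bilinear_br] assms)
  moreover have "lax_matrix br pr A1 P1 = phi_inv_mul (lax_series pr A B)"
    by (simp add: fun_eq_iff lax_matrix_def phi_inv_mul_def lax_series_def A_def B_def
        linear_simps[OF bounded_linear_gcomp] algebra_simps)
  ultimately show ?thesis unfolding S_set_def S_form_def by blast
qed

end

theorem proposition1:
  fixes br :: "'g::real_normed_vector \<Rightarrow> 'g \<Rightarrow> 'g"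
    and fm :: "'g \<Rightarrow> 'g \<Rightarrow> complex"
    and pr :: "nat \<Rightarrow> 'g \<Rightarrow> 'g"
  assumes "z4_graded_lie br fm pr"
  shows "(\<forall>M c L. in_G pr M \<and> (L, 1) \<in> S_set pr \<longrightarrow>
            (\<exists>L'. S_form pr L' \<and>
               (\<forall>Y b. in_G pr Y \<longrightarrow>
                  hat_pair fm (L', 0) (Y, b) = - hat_pair fm (L, 1) (hat_brR br fm (M, c) (Y, b)))))
       \<and> (\<forall>A1 P1. smooth_S1 A1 \<and> smooth_S1 P1 \<longrightarrow> (lax_matrix br pr A1 P1, 1) \<in> S_set pr)"
proof -
  interpret z4_lie br fm pr by (rule z4_lie.intro[OF assms])
  have "\<exists>L'. S_form pr L' \<and> (\<forall>Y b. in_G pr Y \<longrightarrow>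
      hat_pair fm (L', 0) (Y, b) = - hat_pair fm (L, 1) (hat_brR br fm (M, c) (Y, b)))"
    if "in_G pr M" "(L, 1) \<in> S_set pr" for M c L
  proof -
    from \<open>(L, 1) \<in> S_set pr\<close> obtain A B where
      "smooth_S1 A" "smooth_S1 B" "L = phi_inv_mul (lax_series pr A B)"
      unfolding S_set_def S_form_def by blast
    with coadjoint_R_action_S_form[OF \<open>in_G pr M\<close>] show ?thesis by blast
  qed
  then show ?thesis using lax_matrix_in_S_set by blast
qed

end
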